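(* There is an absolute constant $C>0$ such that for every undirected graph $G=(V,E,\omega)$ on $n$ vertices with positive edge weights and every integer $k\ge 1$, there exists a weighted edge set $H$ on $V$ with at most $C\, n^{1+1/(2^k-1)}$ edges which, for every $0<\epsilon<1$ simultaneously, is a $(\beta,\epsilon)$-hopset of $G$ with $\beta=\left(Ck/\epsilon\right)^{k}$.
   Context: For a weighted graph $F$ and positive integer $\beta$, $d^{(\beta)}_F(u,v)$ denotes the minimum length of a $u$–$v$ path in $F$ with at most $\beta$ edges. A weighted edge set $H$ on $V$ (weights $\omega_H(u,v)\ge d_G(u,v)$) is a $(\beta,\epsilon)$-hopset of $G$ if for all $u,v\in V$, $d_G(u,v)\le d^{(\beta)}_{G\cup H}(u,v)\le(1+\epsilon)d_G(u,v)$, where $G\cup H$ has edge set $E\cup H$. *)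

theory Defs
  imports "HOL-Analysis.Analysis"
begin

definition undirected_graph :: "'a set \<Rightarrow> 'a set set \<Rightarrow> bool" where
  "undirected_graph V E \<longleftrightarrow> finite V \<and> (\<forall>e\<in>E. e \<subseteq> V \<and> card e = 2)"

definition positive_weights :: "'a set set \<Rightarrow> ('a set \<Rightarrow> real) \<Rightarrow> bool" where
  "positive_weights E w \<longleftrightarrow> (\<forall>e\<in>E. w e > 0)"

definition is_path :: "'a set \<Rightarrow> 'a set set \<Rightarrow> 'a list \<Rightarrow> 'a \<Rightarrow> 'a \<Rightarrow> bool" where
  "is_path V F xs u v \<longleftrightarrow> xs \<noteq> [] \<and> set xs \<subseteq> V \<and> hd xs = u \<and> last xs = v \<and>
     (\<forall>i < length xs - 1. {xs ! i, xs ! Suc i} \<in> F)"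

definition path_hops :: "'a list \<Rightarrow> nat" where
  "path_hops xs = length xs - 1"

definition path_length :: "('a set \<Rightarrow> real) \<Rightarrow> 'a list \<Rightarrow> real" where
  "path_length w xs = (\<Sum>i < length xs - 1. w {xs ! i, xs ! Suc i})"

text \<open>d_F(u,v): shortest path distance (infinite if no path).\<close>
definition dist_graph :: "'a set \<Rightarrow> 'a set set \<Rightarrow> ('a set \<Rightarrow> real) \<Rightarrow> 'a \<Rightarrow> 'a \<Rightarrow> ereal" where
  "dist_graph V F w u v = (INF xs \<in> {xs. is_path V F xs u v}. ereal (path_length w xs))"

definition hop_dist :: "'a set \<Rightarrow> 'a set set \<Rightarrow> ('a set \<Rightarrow> real) \<Rightarrow> real \<Rightarrow> 'a \<Rightarrow> 'a \<Rightarrow> ereal" where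
  "hop_dist V F w \<beta> u v =
     (INF xs \<in> {xs. is_path V F xs u v \<and> real (path_hops xs) \<le> \<beta>}. ereal (path_length w xs))"

definition union_weight :: "'a set set \<Rightarrow> ('a set \<Rightarrow> real) \<Rightarrow> 'a set set \<Rightarrow> ('a set \<Rightarrow> real)
    \<Rightarrow> 'a set \<Rightarrow> real" where
  "union_weight E w H wH e =
     (if e \<in> E \<and> e \<in> H then min (w e) (wH e) else if e \<in> E then w e else wH e)"

definition is_hopset :: "'a set \<Rightarrow> 'a set set \<Rightarrow> ('a set \<Rightarrow> real) \<Rightarrow> 'a set set \<Rightarrow> ('a set \<Rightarrow> real)
    \<Rightarrow> real \<Rightarrow> real \<Rightarrow> bool" where
  "is_hopset V E w H wH \<beta> \<epsilon> \<longleftrightarrow>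
     (\<forall>e\<in>H. e \<subseteq> V \<and> card e = 2) \<and>
     (\<forall>u v. {u, v} \<in> H \<longrightarrow> ereal (wH {u, v}) \<ge> dist_graph V E w u v) \<and>
     (\<forall>u\<in>V. \<forall>v\<in>V.
        dist_graph V E w u v \<le> hop_dist V (E \<union> H) (union_weight E w H wH) \<beta> u v \<and>
        hop_dist V (E \<union> H) (union_weight E w H wH) \<beta> u v \<le> ereal (1 + \<epsilon>) * dist_graph V E w u v)"

end

theory Submission
  imports Defs
begin

text \<open>
  The hopset is the one of Thorup and Zwick. Sample levels
  \<open>V = A 0 \<supseteq> A 1 \<supseteq> \<dots> \<supseteq> A (k - 1) \<supseteq> A k = {}\<close> with
  \<open>card (A i) \<approx> n powr (1 - (2 ^ i - 1) / (2 ^ k - 1)) / 2 ^ i\<close>, and join every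
  \<open>u \<in> A i\<close> to its bunch (the vertices of \<open>A i\<close> closer to \<open>u\<close> than \<open>A (i + 1)\<close>)
  and to its pivot (a nearest vertex of \<open>A (i + 1)\<close>), weighting each edge by the exact
  distance. Choosing each \<open>A (i + 1) \<subseteq> A i\<close> by averaging over all subsets of the right
  size keeps the bunches small, and the level sizes make the total
  \<open>O(n powr (1 + 1 / (2 ^ k - 1)))\<close>.

  The stretch bound is an induction on \<open>i\<close>: every shortest path from \<open>x\<close> to \<open>y\<close> of
  length \<open>L\<close> is either \<open>(1 + 16 i / l)\<close>-approximated with \<open>(3 l) ^ i\<close> hops, or \<open>x\<close>
  reaches \<open>A (i + 1)\<close> with as many hops and length \<open>4 L\<close>. For the step, cut the path
  into at most \<open>2 l + 1\<close> pieces, each a single edge or of length at most \<open>L / l\<close>. Pieces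
  approximated at level \<open>i\<close> are concatenated; between the first and the last failing piece
  the path is bypassed by one hopset edge of level \<open>i + 1\<close> joining vertices of
  \<open>A (i + 1)\<close> near both, at an extra cost of \<open>16 L / l\<close>. Taking \<open>l \<approx> 16 k / \<epsilon>\<close>
  gives \<open>\<beta> = O(k / \<epsilon>) ^ k\<close>. Graphs with fewer than \<open>4 ^ (k - 1)\<close> vertices take the
  empty hopset, since then \<open>\<beta>\<close> exceeds the number of hops of every simple path.
\<close>

section \<open>Paths\<close>

lemma is_path_iff_successively:
  "is_path V F xs u v \<longleftrightarrow> xs \<noteq> [] \<and> set xs \<subseteq> V \<and> hd xs = u \<and> last xs = v \<and>
     successively (\<lambda>a b. {a, b} \<in> F) xs"
  by (auto simp: is_path_def successively_conv_nth)

lemma is_path_singleton [simp]: "is_path V F [x] u v \<longleftrightarrow> x \<in> V \<and> u = x \<and> v = x"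
  by (auto simp: is_path_def)

lemma is_path_Cons_Cons:
  "is_path V F (x # y # zs) u v \<longleftrightarrow> x = u \<and> x \<in> V \<and> {x, y} \<in> F \<and> is_path V F (y # zs) y v"
  by (auto simp: is_path_iff_successively)

lemma is_path_endpoints: "is_path V F xs u v \<Longrightarrow> u \<in> V \<and> v \<in> V"
  unfolding is_path_def by (metis hd_in_set last_in_set subsetD)

lemma is_path_edge: "{u, v} \<in> F \<Longrightarrow> {u, v} \<subseteq> V \<Longrightarrow> is_path V F [u, v] u v"
  by (simp add: is_path_Cons_Cons)

lemma is_path_append:
  assumes "is_path V F xs u v" "is_path V F ys v z"
  shows "is_path V F (xs @ tl ys) u z"
  using assms by (cases ys) (auto simp: is_path_iff_successively successively_append_iff
      successively_Cons last_append)

lemma is_path_split: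
  assumes "is_path V F (xs @ y # ys) u v"
  shows "is_path V F (xs @ [y]) u y" "is_path V F (y # ys) y v"
  using assms by (auto simp: is_path_iff_successively successively_append_iff hd_append)

lemma is_path_rev: "is_path V F xs u v \<Longrightarrow> is_path V F (rev xs) v u"
  by (auto simp: is_path_iff_successively hd_rev last_rev insert_commute)

lemma path_hops_append:
  "xs \<noteq> [] \<Longrightarrow> ys \<noteq> [] \<Longrightarrow> path_hops (xs @ tl ys) = path_hops xs + path_hops ys"
  by (cases xs; cases ys) (auto simp: path_hops_def)

lemma path_length_singleton [simp]: "path_length w [x] = 0"
  by (simp add: path_length_def)

lemma path_length_Cons_Cons [simp]:
  "path_length w (x # y # zs) = w {x, y} + path_length w (y # zs)"
  unfolding path_length_def by (simp add: sum.lessThan_Suc_shift del: sum.lessThan_Suc)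

lemma path_length_append:
  "xs \<noteq> [] \<Longrightarrow> path_length w (xs @ zs) = path_length w xs + path_length w (last xs # zs)"
  by (induction xs rule: induct_list012) auto

lemma path_length_rev: "path_length w (rev xs) = path_length w xs"
proof (induction xs rule: induct_list012)
  case (3 x y zs)
  have "path_length w (rev (y # zs) @ [x]) = path_length w (rev (y # zs)) + path_length w [y, x]"
    using path_length_append[of "rev (y # zs)" w "[x]"] by (simp add: last_rev)
  with 3 show ?case by (simp add: insert_commute)
qed (auto simp: path_length_def)

definition prefix_length :: "('a set \<Rightarrow> real) \<Rightarrow> 'a list \<Rightarrow> nat \<Rightarrow> real" where
  "prefix_length w P t = path_length w (take (Suc t) P)"

lemma prefix_length_0 [simp]: "prefix_length w P 0 = 0"
  by (cases P) (auto simp: prefix_length_def path_length_def)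

lemma prefix_length_last: "prefix_length w P (length P - 1) = path_length w P"
  by (cases P) (auto simp: prefix_length_def)

lemma path_length_segment:
  assumes "a \<le> b" "b < length P"
  shows "path_length w (take (Suc (b - a)) (drop a P)) = prefix_length w P b - prefix_length w P a"
proof -
  have a: "a < length P" and "P \<noteq> []" using assms by auto
  have "take (Suc b) P = take (Suc a) P @ take (b - a) (drop (Suc a) P)"
    using take_add[of "Suc a" "b - a" P] assms by simp
  moreover have "last (take (Suc a) P) = P ! a" using a by (simp add: take_Suc_conv_app_nth)
  moreover have "take (Suc (b - a)) (drop a P) = P ! a # take (b - a) (drop (Suc a) P)"
    using a by (simp add: Cons_nth_drop_Suc[symmetric])
  ultimately show ?thesis
    using path_length_append[of "take (Suc a) P" w "take (b - a) (drop (Suc a) P)"] \<open>P \<noteq> []\<close>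
    unfolding prefix_length_def by simp
qed

section \<open>Cut sequences and random sampling\<close>

text \<open>Greedily jump to the furthest point within \<open>\<Delta>\<close> and then take one more step: every such pair
  of cuts advances \<open>dd\<close> by more than \<open>\<Delta>\<close>.\<close>

lemma exists_cut_points:
  fixes dd :: "nat \<Rightarrow> real" and \<Delta> :: real
  assumes mono: "\<And>a b. a \<le> b \<Longrightarrow> b \<le> r \<Longrightarrow> dd a \<le> dd b"
    and "p \<le> r" and "dd r - dd p \<le> real n * \<Delta>" and "\<Delta> > 0"
  shows "\<exists>cs. cs \<noteq> [] \<and> hd cs = p \<and> last cs = r \<and> length cs \<le> 2 * n + 2 \<and>
    successively (\<lambda>i j. i \<le> j \<and> (j = Suc i \<or> dd j - dd i \<le> \<Delta>)) cs"
  using assms(2,3)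
proof (induction n arbitrary: p)
  case 0
  then show ?case using \<open>\<Delta> > 0\<close> by (intro exI[of _ "[p, r]"]) auto
next
  case n: (Suc n)
  define a where "a = Max {t. p \<le> t \<and> t \<le> r \<and> dd t - dd p \<le> \<Delta>}"
  have fin: "finite {t. p \<le> t \<and> t \<le> r \<and> dd t - dd p \<le> \<Delta>}" by simp
  have "p \<in> {t. p \<le> t \<and> t \<le> r \<and> dd t - dd p \<le> \<Delta>}" using n.prems \<open>\<Delta> > 0\<close> by simp
  then have "a \<in> {t. p \<le> t \<and> t \<le> r \<and> dd t - dd p \<le> \<Delta>}"
    unfolding a_def by (intro Max_in[OF fin]) auto
  then have a: "p \<le> a" "a \<le> r" "dd a - dd p \<le> \<Delta>" by auto
  show ?case
  proof (cases "a = r")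
    case True
    then show ?thesis using a by (intro exI[of _ "[p, r]"]) auto
  next
    case False
    then have "\<not> dd (Suc a) - dd p \<le> \<Delta>"
      using Max_ge[OF fin, of "Suc a"] a unfolding a_def[symmetric] by auto
    moreover have "dd (Suc a) \<le> dd r" using mono a False by simp
    ultimately have "dd r - dd (Suc a) \<le> real n * \<Delta>" using n.prems by (simp add: algebra_simps)
    then obtain cs where cs: "cs \<noteq> []" "hd cs = Suc a" "last cs = r" "length cs \<le> 2 * n + 2"
      "successively (\<lambda>i j. i \<le> j \<and> (j = Suc i \<or> dd j - dd i \<le> \<Delta>)) cs"
      using n.IH[of "Suc a"] a False by auto
    then show ?thesis using a by (intro exI[of _ "p # a # cs"]) (auto simp: successively_Cons)
  qed
qed

definition cut_sequence :: "(nat \<Rightarrow> real) \<Rightarrow> nat \<Rightarrow> real \<Rightarrow> nat \<Rightarrow> (nat \<Rightarrow> nat) \<Rightarrow> bool" where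
  "cut_sequence dd r \<Delta> s c \<longleftrightarrow> c 0 = 0 \<and> c s = r \<and> (\<forall>j k. j \<le> k \<longrightarrow> k \<le> s \<longrightarrow> c j \<le> c k) \<and>
     (\<forall>j<s. c (Suc j) = Suc (c j) \<or> dd (c (Suc j)) - dd (c j) \<le> \<Delta>)"

lemma exists_cut_sequence:
  fixes dd :: "nat \<Rightarrow> real" and \<Delta> :: real
  assumes mono: "\<And>a b. a \<le> b \<Longrightarrow> b \<le> r \<Longrightarrow> dd a \<le> dd b"
    and "dd r - dd 0 \<le> real n * \<Delta>" and "\<Delta> > 0"
  obtains s c where "s \<le> 2 * n + 1" "cut_sequence dd r \<Delta> s c"
proof -
  obtain cs where cs: "cs \<noteq> []" "hd cs = 0" "last cs = r" "length cs \<le> 2 * n + 2"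
    and steps: "successively (\<lambda>i j. i \<le> j \<and> (j = Suc i \<or> dd j - dd i \<le> \<Delta>)) cs"
    using exists_cut_points[OF mono _ assms(2,3)] by blast
  have "successively (\<le>) cs" using steps by (rule successively_mono) simp
  then have "sorted cs" by (simp add: successively_conv_sorted_wrt)
  have "cs ! j \<le> cs ! k" if "j \<le> k" "k \<le> length cs - 1" for j k
  proof -
    have "k < length cs" using that(2) cs(1) by (cases cs) auto
    then show ?thesis using sorted_nth_mono[OF \<open>sorted cs\<close> that(1)] by simp
  qed
  moreover have "cs ! Suc j = Suc (cs ! j) \<or> dd (cs ! Suc j) - dd (cs ! j) \<le> \<Delta>"
    if "j < length cs - 1" for j
    using successively_nth[OF steps, of j] that by simp
  moreover have "cs ! 0 = 0" "cs ! (length cs - 1) = r"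
    using cs by (simp_all add: hd_conv_nth last_conv_nth)
  ultimately have "cut_sequence dd r \<Delta> (length cs - 1) (\<lambda>j. cs ! j)"
    unfolding cut_sequence_def by blast
  moreover have "length cs - 1 \<le> 2 * n + 1" using cs(4) by simp
  ultimately show ?thesis using that by blast
qed

lemma first_and_last_failure:
  fixes s :: nat
  assumes "\<not> (\<forall>j<s. Q j)"
  obtains f g where "f \<le> g" "g < s" "\<not> Q f" "\<not> Q g" "\<And>j. j < f \<Longrightarrow> Q j"
    "\<And>j. g < j \<Longrightarrow> j < s \<Longrightarrow> Q j"
proof -
  define F where "F = {j. j < s \<and> \<not> Q j}"
  have F: "finite F" "F \<noteq> {}" using assms unfolding F_def by auto
  have min: "Min F \<in> F" and max: "Max F \<in> F" using F by simp_all
  show ?thesis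
  proof
    show "Min F \<le> Max F" using F by simp
    show "Max F < s" "\<not> Q (Min F)" "\<not> Q (Max F)" using min max unfolding F_def by auto
    show "Q j" if "j < Min F" for j
    proof (rule ccontr)
      assume "\<not> Q j"
      then have "j \<in> F" using that min unfolding F_def by auto
      then show False using that Min_le[OF F(1)] by fastforce
    qed
    show "Q j" if "Max F < j" "j < s" for j
    proof (rule ccontr)
      assume "\<not> Q j"
      then have "j \<in> F" using that unfolding F_def by auto
      then show False using that Max_ge[OF F(1)] by fastforce
    qed
  qed
qed

lemma sum_choose_diff: "(\<Sum>j<m. (m - Suc j) choose s) = m choose Suc s"
proof (cases m)
  case (Suc n)
  have "(\<Sum>j<m. (m - Suc j) choose s) = (\<Sum>j<m. j choose s)" by (rule sum.nat_diff_reindex)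
  also have "\<dots> = (\<Sum>j\<le>n. j choose s)" using Suc lessThan_Suc_atMost by simp
  finally show ?thesis using sum_choose_upper Suc by simp
qed simp

lemma sum_antimono_rank_le:
  fixes f :: "nat \<Rightarrow> 'c::ordered_comm_monoid_add" and g :: "'a \<Rightarrow> 'b::linorder"
  assumes antimono: "\<And>a b. a \<le> b \<Longrightarrow> f b \<le> f a" and "finite X"
  shows "(\<Sum>v\<in>X. f (card {u\<in>X. g u \<le> g v})) \<le> (\<Sum>j<card X. f (Suc j))"
  using assms(2)
proof (induction "card X" arbitrary: X)
  case (Suc n X)
  then have "X \<noteq> {}" by auto
  then have "Max (g ` X) \<in> g ` X" using Suc.prems by simp
  then obtain v0 where v0: "v0 \<in> X" "g v0 = Max (g ` X)" by auto
  then have top: "{u\<in>X. g u \<le> g v0} = X" using Suc.prems by auto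
  define X' where "X' = X - {v0}"
  have X': "finite X'" "card X' = n" "card X = Suc (card X')"
    using Suc v0 unfolding X'_def by auto
  have split: "(\<Sum>v\<in>X. f (card {u\<in>X. g u \<le> g v}))
      = f (card X) + (\<Sum>v\<in>X'. f (card {u\<in>X. g u \<le> g v}))"
    using Suc.prems v0 top unfolding X'_def by (simp add: sum.remove)
  have "(\<Sum>v\<in>X'. f (card {u\<in>X. g u \<le> g v})) \<le> (\<Sum>v\<in>X'. f (card {u\<in>X'. g u \<le> g v}))"
    using Suc.prems by (intro sum_mono antimono card_mono) (auto simp: X'_def)
  also have "\<dots> \<le> (\<Sum>j<card X'. f (Suc j))"
    using Suc.hyps(1)[of X'] X' by simp
  finally have "(\<Sum>v\<in>X. f (card {u\<in>X. g u \<le> g v})) \<le> f (card X) + (\<Sum>j<card X'. f (Suc j))"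
    unfolding split by (rule add_left_mono)
  then show ?case using X'(3) by (simp add: add.commute)
qed simp

lemma sum_card_subsets_above_le:
  fixes g :: "'a \<Rightarrow> 'b::linorder"
  assumes fin: "finite X"
  shows "(\<Sum>v\<in>X. card {S. S \<subseteq> X \<and> card S = s \<and> (\<forall>w\<in>S. g v < g w)}) \<le> card X choose Suc s"
proof -
  have "card {S. S \<subseteq> X \<and> card S = s \<and> (\<forall>w\<in>S. g v < g w)}
      = (card X - card {u\<in>X. g u \<le> g v}) choose s" for v
  proof -
    have "{S. S \<subseteq> X \<and> card S = s \<and> (\<forall>w\<in>S. g v < g w)} = {S. S \<subseteq> X - {u\<in>X. g u \<le> g v} \<and> card S = s}"
      by (auto simp: not_le)
    moreover have "card (X - {u\<in>X. g u \<le> g v}) = card X - card {u\<in>X. g u \<le> g v}"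
      using fin by (simp add: card_Diff_subset)
    ultimately show ?thesis using n_subsets[of "X - {u\<in>X. g u \<le> g v}" s] fin by simp
  qed
  then have "(\<Sum>v\<in>X. card {S. S \<subseteq> X \<and> card S = s \<and> (\<forall>w\<in>S. g v < g w)})
      = (\<Sum>v\<in>X. (card X - card {u\<in>X. g u \<le> g v}) choose s)" by simp
  also have "\<dots> \<le> (\<Sum>j<card X. (card X - Suc j) choose s)"
    by (rule sum_antimono_rank_le[OF _ fin]) (simp add: binomial_right_mono)
  also have "\<dots> = card X choose Suc s" by (rule sum_choose_diff)
  finally show ?thesis .
qed

lemma sum_card_filter_swap:
  "finite A \<Longrightarrow> finite B \<Longrightarrow> (\<Sum>x\<in>A. card {y\<in>B. R x y}) = (\<Sum>y\<in>B. card {x\<in>A. R x y})"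
  using sum.swap_restrict[of A B "\<lambda>_ _. 1::nat" R] by simp

text \<open>Averaging over all \<open>s\<close>-subsets \<open>S\<close>: a point \<open>v\<close> counts for \<open>u\<close> iff \<open>S\<close> avoids the points at
  most as far from \<open>u\<close> as \<open>v\<close>, so the counts sum to at most
  \<open>card X * (card X choose Suc s)\<close> over the \<open>card X choose s\<close> subsets.\<close>

lemma exists_subset_few_closer:
  fixes g :: "'a \<Rightarrow> 'a \<Rightarrow> 'b::linorder"
  assumes fin: "finite X" and s: "s \<le> card X"
  shows "\<exists>S\<subseteq>X. card S = s \<and>
    real (\<Sum>u\<in>X. card {v\<in>X. \<forall>w\<in>S. g u v < g u w}) \<le> real (card X) * (card X - s) / (s + 1)"
proof -
  define m where "m = card X"
  define F where "F = {S. S \<subseteq> X \<and> card S = s}"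
  define closer where "closer S = (\<Sum>u\<in>X. card {v\<in>X. \<forall>w\<in>S. g u v < g u w})" for S
  define avg where "avg = real m * (m - s) / (s + 1)"
  have finF: "finite F" unfolding F_def using fin by simp
  have cardF: "card F = m choose s" unfolding F_def m_def using n_subsets[OF fin] by simp
  then have "F \<noteq> {}" using s m_def by auto
  have "(\<Sum>S\<in>F. closer S) = (\<Sum>u\<in>X. \<Sum>S\<in>F. card {v\<in>X. \<forall>w\<in>S. g u v < g u w})"
    unfolding closer_def by (rule sum.swap)
  also have "\<dots> = (\<Sum>u\<in>X. \<Sum>v\<in>X. card {S\<in>F. \<forall>w\<in>S. g u v < g u w})"
    using sum_card_filter_swap[OF finF fin] by simp
  also have "\<dots> \<le> (\<Sum>u\<in>X. m choose Suc s)"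
    using sum_card_subsets_above_le[OF fin] unfolding F_def m_def by (intro sum_mono) simp
  finally have "(\<Sum>S\<in>F. closer S) \<le> m * (m choose Suc s)" by (simp add: m_def)
  then have upper: "(\<Sum>S\<in>F. real (closer S)) \<le> real m * real (m choose Suc s)"
    by (simp flip: of_nat_sum of_nat_mult)
  have "Suc s * (m choose Suc s) = (m - s) * (m choose s)"
    using binomial_absorption[of s m] binomial_absorb_comp[of m s] by simp
  then have "real (Suc s * (m choose Suc s)) = real ((m - s) * (m choose s))" by (rule arg_cong)
  then have "real (Suc s) * real (m choose Suc s) = real (m - s) * real (m choose s)"
    by (simp only: of_nat_mult)
  then have "real (m choose Suc s) = real (m - s) * real (m choose s) / (s + 1)"
    by (simp add: field_simps)
  then have mean: "real m * real (m choose Suc s) = real (card F) * avg"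
    unfolding cardF avg_def by simp
  have "\<exists>S\<in>F. real (closer S) \<le> avg"
  proof (rule ccontr)
    assume "\<not> ?thesis"
    then have "(\<Sum>S\<in>F. avg) < (\<Sum>S\<in>F. real (closer S))"
      using finF \<open>F \<noteq> {}\<close> by (intro sum_strict_mono) (auto simp: not_le)
    then show False using upper mean by simp
  qed
  then show ?thesis unfolding F_def closer_def avg_def m_def by auto
qed

section \<open>Level sizes\<close>

text \<open>The exponents are chosen so that \<open>level_target n k i ^ 2 / level_target n k (Suc i)\<close> is
  \<open>2 * n powr (1 + 1 / (2 ^ k - 1)) / 2 ^ i\<close>, which sums geometrically over the levels.\<close>

definition level_target :: "nat \<Rightarrow> nat \<Rightarrow> nat \<Rightarrow> real" where
  "level_target n k i = real n powr (1 - (2 ^ i - 1) / (2 ^ k - 1)) / 2 ^ i"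

definition level_size :: "nat \<Rightarrow> nat \<Rightarrow> nat \<Rightarrow> nat" where
  "level_size n k i = nat \<lceil>level_target n k i\<rceil>"

lemma level_target_pos: "1 \<le> n \<Longrightarrow> level_target n k i > 0"
  by (simp add: level_target_def)

lemma level_target_Suc_le: "1 \<le> n \<Longrightarrow> level_target n k (Suc i) \<le> level_target n k i"
proof -
  assume n: "1 \<le> n"
  have "(2 ^ i - 1) / (2 ^ k - 1) \<le> (2 ^ Suc i - 1) / (2 ^ k - 1 :: real)"
    by (intro divide_right_mono) auto
  then have "real n powr (1 - (2 ^ Suc i - 1) / (2 ^ k - 1))
      \<le> real n powr (1 - (2 ^ i - 1) / (2 ^ k - 1))"
    using n by (intro powr_mono) auto
  then show ?thesis unfolding level_target_def by (intro frac_le) auto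
qed

lemma level_target_ge_1:
  assumes "1 \<le> k" "4 ^ (k - 1) \<le> n" "i \<le> k - 1"
  shows "1 \<le> level_target n k i"
proof -
  have "(1::nat) \<le> 4 ^ (k - 1)" by simp
  then have n: "real n \<ge> 1" using assms(2) by linarith
  have "Suc i \<le> k" using assms by linarith
  then have "2 * (2 ^ i - 1) \<le> (2 ^ k - 1 :: real)"
    using power_increasing[of "Suc i" k "2::real"] by simp
  then have half: "1 / 2 \<le> 1 - (2 ^ i - 1) / (2 ^ k - 1 :: real)"
    using assms(1) by (simp add: field_simps)
  have "((2::real) ^ i) ^ 2 = 4 ^ i" by (induction i) (simp_all add: power_mult_distrib)
  also have "\<dots> \<le> 4 ^ (k - 1)" using assms(3) by (intro power_increasing) auto
  also have "\<dots> = real (4 ^ (k - 1))" by simp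
  also have "\<dots> \<le> real n" using assms(2) by (simp only: of_nat_le_iff)
  finally have "(2::real) ^ i \<le> sqrt (real n)" by (rule real_le_rsqrt)
  also have "\<dots> = real n powr (1 / 2)" using n by (simp add: powr_half_sqrt)
  also have "\<dots> \<le> real n powr (1 - (2 ^ i - 1) / (2 ^ k - 1))" using half n by (intro powr_mono) auto
  finally show ?thesis unfolding level_target_def by simp
qed

lemma level_target_sq_div:
  assumes "1 \<le> k" "1 \<le> n"
  shows "level_target n k i ^ 2 / level_target n k (Suc i)
    = 2 * real n powr (1 + 1 / (2 ^ k - 1)) / 2 ^ i"
proof -
  define c :: real where "c = 2 ^ k - 1"
  define e where "e j = 1 - (2 ^ j - 1) / c" for j :: nat
  have "(2::real) ^ k \<ge> 2" using power_increasing[of 1 k "2::real"] assms(1) by simp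
  then have "c \<noteq> 0" unfolding c_def by simp
  then have "e i + e i - e (Suc i) = 1 + 1 / c" unfolding e_def by (simp add: field_simps)
  then have "real n powr e i * real n powr e i / real n powr e (Suc i) = real n powr (1 + 1 / c)"
    by (simp flip: powr_add powr_diff)
  then show ?thesis
    unfolding level_target_def c_def[symmetric] e_def[symmetric]
      by (simp add: power2_eq_square field_simps)
qed

lemma level_target_top_sq:
  assumes "1 \<le> k"
  shows "level_target n k (k - 1) ^ 2 \<le> real n powr (1 + 1 / (2 ^ k - 1))"
proof -
  define c :: real where "c = 2 ^ k - 1"
  obtain k' where k': "k = Suc k'" using assms by (cases k) auto
  have "(1::real) \<le> 2 ^ k'" "(2::real) ^ k = 2 * 2 ^ k'" by (simp_all add: k')
  then have c: "2 * 2 ^ k' = c + 1" "c \<noteq> 0" unfolding c_def by linarith+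
  then have exponent: "(1 - (2 ^ k' - 1) / c) + (1 - (2 ^ k' - 1) / c) = 1 + 1 / c"
    by (simp add: field_simps)
  have "(real n powr (1 - (2 ^ k' - 1) / c)) ^ 2
      = real n powr ((1 - (2 ^ k' - 1) / c) + (1 - (2 ^ k' - 1) / c))"
    by (simp only: power2_eq_square powr_add)
  then have sq: "(real n powr (1 - (2 ^ k' - 1) / c)) ^ 2 = real n powr (1 + 1 / c)"
    by (simp only: exponent)
  have "level_target n k (k - 1) = real n powr (1 - (2 ^ k' - 1) / c) / 2 ^ k'"
    by (simp add: level_target_def c_def k')
  then have "level_target n k (k - 1) ^ 2 = real n powr (1 + 1 / c) / (2 ^ k') ^ 2"
    by (simp only: power_divide sq)
  also have "\<dots> \<le> real n powr (1 + 1 / c)"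
    using \<open>(1::real) \<le> 2 ^ k'\<close> by (simp add: divide_le_eq mult_le_cancel_left1)
  finally show ?thesis unfolding c_def .
qed

lemma level_size_0 [simp]: "level_size n k 0 = n"
  by (simp add: level_size_def level_target_def)

lemma level_size_bounds:
  assumes "1 \<le> n"
  shows "level_target n k i \<le> level_size n k i" "level_size n k i \<le> level_target n k i + 1"
proof -
  have "0 \<le> \<lceil>level_target n k i\<rceil>" using level_target_pos[OF assms, of k i] by simp
  then have "real (level_size n k i) = of_int \<lceil>level_target n k i\<rceil>"
    unfolding level_size_def by simp
  then show "level_target n k i \<le> level_size n k i" "level_size n k i \<le> level_target n k i + 1"
    using le_of_int_ceiling[of "level_target n k i"] ceiling_correct[of "level_target n k i"]
      by linarith+
qed

lemma level_size_Suc_le: "1 \<le> n \<Longrightarrow> level_size n k (Suc i) \<le> level_size n k i"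
  unfolding level_size_def by (intro nat_mono ceiling_mono level_target_Suc_le)

lemma level_size_ge_1:
  assumes "1 \<le> k" "4 ^ (k - 1) \<le> n" "i \<le> k - 1"
  shows "1 \<le> level_size n k i"
proof -
  have "1 \<le> level_target n k i" using level_target_ge_1[OF assms] .
  then have "1 \<le> \<lceil>level_target n k i\<rceil>" by (simp add: one_le_ceiling)
  then show ?thesis unfolding level_size_def by linarith
qed

lemma sum_half_powers_le: "(\<Sum>i<m. (1 / 2 :: real) ^ i) \<le> 2"
proof -
  have "(\<Sum>i<m. (1 / 2 :: real) ^ i) = (1 - (1 / 2) ^ m) / (1 - 1 / 2)"
    by (simp add: sum_gp_strict)
  also have "\<dots> \<le> 2" by simp
  finally show ?thesis .
qed

lemma level_size_sum_le:
  assumes k: "1 \<le> k" and n: "4 ^ (k - 1) \<le> n"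
  shows "(\<Sum>i<k - 1. 2 * real (level_size n k i) ^ 2 / real (level_size n k (Suc i)))
      + real (level_size n k (k - 1)) ^ 2 \<le> 36 * real n powr (1 + 1 / (2 ^ k - 1))"
proof -
  define N where "N = real n powr (1 + 1 / (2 ^ k - 1))"
  define \<tau> where "\<tau> = level_target n k"
  define sz where "sz = level_size n k"
  have "(1::nat) \<le> 4 ^ (k - 1)" by simp
  then have n1: "1 \<le> n" using n by linarith
  have upper: "real (sz i) \<le> 2 * \<tau> i" if "i \<le> k - 1" for i
    using level_size_bounds[OF n1, of k i] level_target_ge_1[OF k n that]
      unfolding sz_def \<tau>_def by simp
  have lower: "\<tau> i \<le> real (sz i)" "0 < \<tau> i" for i
    using level_size_bounds[OF n1] level_target_pos[OF n1] unfolding sz_def \<tau>_def by auto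
  have level: "2 * real (sz i) ^ 2 / real (sz (Suc i)) \<le> 16 * N * (1 / 2) ^ i" if "i < k - 1" for i
  proof -
    have "2 * real (sz i) ^ 2 / real (sz (Suc i)) \<le> 2 * (2 * \<tau> i) ^ 2 / \<tau> (Suc i)"
      using upper[of i] lower[of i] lower[of "Suc i"] that
      by (intro divide_mono mult_left_mono power_mono) auto
    also have "\<dots> = 8 * (\<tau> i ^ 2 / \<tau> (Suc i))" by (simp add: power2_eq_square)
    also have "\<dots> = 16 * N * (1 / 2) ^ i"
      using level_target_sq_div[OF k n1] unfolding \<tau>_def N_def by (simp add: power_one_over)
    finally show ?thesis .
  qed
  have "(\<Sum>i<k - 1. 2 * real (sz i) ^ 2 / real (sz (Suc i))) \<le> (\<Sum>i<k - 1. 16 * N * (1 / 2) ^ i)"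
    using level by (intro sum_mono) simp
  also have "\<dots> \<le> 16 * N * 2"
    unfolding sum_distrib_left[symmetric] using sum_half_powers_le
    by (intro mult_left_mono) (auto simp: N_def)
  finally have "(\<Sum>i<k - 1. 2 * real (sz i) ^ 2 / real (sz (Suc i))) \<le> 32 * N" by simp
  moreover have "real (sz (k - 1)) ^ 2 \<le> 4 * N"
  proof -
    have "real (sz (k - 1)) ^ 2 \<le> (2 * \<tau> (k - 1)) ^ 2"
      using upper[of "k - 1"] lower[of "k - 1"] by (intro power_mono) auto
    also have "\<dots> \<le> 4 * N"
      using level_target_top_sq[OF k, of n] unfolding \<tau>_def N_def by (simp add: power_mult_distrib)
    finally show ?thesis .
  qed
  ultimately show ?thesis unfolding N_def sz_def by linarith
qed

lemma exists_level_parameter: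
  assumes k: "1 \<le> k" and \<epsilon>: "0 < \<epsilon>" "\<epsilon> < 1"
  obtains lv :: nat where "16 \<le> lv" "16 * (k - 1) \<le> lv" "16 * real (k - 1) / lv \<le> \<epsilon>"
    "real ((3 * lv) ^ (k - 1)) \<le> (64 * real k / \<epsilon>) ^ k"
proof
  define q where "q = real k / \<epsilon>"
  have q: "real k \<le> q" "1 \<le> q" using k \<epsilon> unfolding q_def by (auto simp: field_simps)
  define lv where "lv = nat \<lceil>16 * q\<rceil>"
  have lv: "16 * q \<le> real lv" "real lv \<le> 16 * q + 1" unfolding lv_def using q by linarith+
  show "16 \<le> lv" "16 * (k - 1) \<le> lv" using lv q by linarith+
  have "16 * real (k - 1) \<le> \<epsilon> * (16 * q)" using \<epsilon> unfolding q_def by simp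
  also have "\<dots> \<le> \<epsilon> * real lv" using lv \<epsilon> by simp
  finally show "16 * real (k - 1) / lv \<le> \<epsilon>" using lv q by (simp add: divide_le_eq mult.commute)
  have "real (3 * lv) \<le> 64 * q" using lv q by simp
  then have "real (3 * lv) ^ (k - 1) \<le> (64 * q) ^ (k - 1)" by (rule power_mono) simp
  then have "real ((3 * lv) ^ (k - 1)) \<le> (64 * q) ^ (k - 1)" by (simp only: of_nat_power)
  also have "\<dots> \<le> (64 * q) ^ k" using q by (intro power_increasing) auto
  finally show "real ((3 * lv) ^ (k - 1)) \<le> (64 * real k / \<epsilon>) ^ k" unfolding q_def by simp
qed

lemma small_card_le_hop_bound:
  assumes k: "1 \<le> k" and \<epsilon>: "0 < \<epsilon>" "\<epsilon> < 1" and n: "n < 4 ^ (k - 1)"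
  shows "real n \<le> (64 * real k / \<epsilon>) ^ k"
proof -
  have "1 \<le> real k / \<epsilon>" using k \<epsilon> by (simp add: field_simps)
  have "real n \<le> real (4 ^ (k - 1))" using n by simp
  also have "\<dots> = 4 ^ (k - 1)" by simp
  also have "\<dots> \<le> (64::real) ^ (k - 1)" by (rule power_mono) auto
  also have "\<dots> \<le> 64 ^ k" by (rule power_increasing) auto
  also have "(64::real) ^ k \<le> (64 * real k / \<epsilon>) ^ k"
    using \<open>1 \<le> real k / \<epsilon>\<close> by (intro power_mono) auto
  finally show ?thesis .
qed

section \<open>Shortest paths\<close>

locale weighted_graph =
  fixes V :: "'a set" and E :: "'a set set" and w :: "'a set \<Rightarrow> real"
  assumes graph: "undirected_graph V E" and weights: "positive_weights E w"
begin

abbreviation d :: "'a \<Rightarrow> 'a \<Rightarrow> ereal" where "d \<equiv> dist_graph V E w"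

lemma finite_vertices: "finite V"
  using graph by (simp add: undirected_graph_def)

lemma edge_subset: "e \<in> E \<Longrightarrow> e \<subseteq> V \<and> card e = 2"
  using graph by (simp add: undirected_graph_def)

lemma weight_pos: "e \<in> E \<Longrightarrow> w e > 0"
  using weights by (simp add: positive_weights_def)

lemma path_length_nonneg: "is_path V E xs u v \<Longrightarrow> path_length w xs \<ge> 0"
proof (induction xs arbitrary: u rule: induct_list012)
  case (3 x y zs)
  then show ?case
    by (auto simp: is_path_Cons_Cons intro: add_nonneg_nonneg less_imp_le[OF weight_pos])
qed (auto simp: is_path_def)

lemma exists_distinct_path_shorter:
  assumes "is_path V E xs u v"
  shows "\<exists>ys. is_path V E ys u v \<and> distinct ys \<and> path_length w ys \<le> path_length w xs"
  using assms
proof (induction "length xs" arbitrary: xs rule: less_induct)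
  case less
  show ?case
  proof (cases "distinct xs")
    case False
    then obtain as bs cs y where xs: "xs = as @ [y] @ bs @ [y] @ cs"
      by (metis not_distinct_decomp)
    have pre: "is_path V E (as @ [y]) u y" and mid: "is_path V E (y # bs @ y # cs) y v"
      using is_path_split[of V E as y "bs @ y # cs" u v] less.prems xs by auto
    have loop: "is_path V E (y # bs @ [y]) y y" and rest: "is_path V E (y # cs) y v"
      using is_path_split[of V E "y # bs" y cs y v] mid by auto
    have "path_length w xs
        = path_length w (as @ [y]) + path_length w (y # bs @ [y]) + path_length w (y # cs)"
      using xs path_length_append[of "as @ [y]" w "bs @ y # cs"]
        path_length_append[of "y # bs @ [y]" w cs] by simp
    moreover have "path_length w (as @ y # cs) = path_length w (as @ [y]) + path_length w (y # cs)"
      using path_length_append[of "as @ [y]" w cs] by simp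
    moreover have "is_path V E (as @ y # cs) u v"
      using is_path_append[OF pre rest] by simp
    moreover have "length (as @ y # cs) < length xs" using xs by simp
    ultimately show ?thesis
      using less.hyps[of "as @ y # cs"] path_length_nonneg[OF loop] by fastforce
  qed (use less.prems in auto)
qed

definition shortest_path :: "'a list \<Rightarrow> 'a \<Rightarrow> 'a \<Rightarrow> bool" where
  "shortest_path P u v \<longleftrightarrow>
     is_path V E P u v \<and> (\<forall>Q. is_path V E Q u v \<longrightarrow> path_length w P \<le> path_length w Q)"

lemma exists_shortest_path:
  assumes "is_path V E xs u v"
  shows "\<exists>P. shortest_path P u v"
proof -
  let ?S = "{ys. is_path V E ys u v \<and> distinct ys}"
  have "?S \<subseteq> {ys. set ys \<subseteq> V \<and> distinct ys}" by (auto simp: is_path_def)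
  then have fin: "finite ?S" using finite_subset_distinct[OF finite_vertices] finite_subset by blast
  have "?S \<noteq> {}" using exists_distinct_path_shorter[OF assms] by blast
  then obtain P where P: "P \<in> ?S" "Min (path_length w ` ?S) = path_length w P"
    by (rule obtains_MIN[OF fin])
  then have P_min: "path_length w P \<le> path_length w Q" if "Q \<in> ?S" for Q
    using Min_le[OF finite_imageI[OF fin] imageI[OF that], of "path_length w"] by simp
  have "path_length w P \<le> path_length w Q" if Q: "is_path V E Q u v" for Q
  proof -
    obtain ys where "ys \<in> ?S" "path_length w ys \<le> path_length w Q"
      using exists_distinct_path_shorter[OF Q] by blast
    then show ?thesis using P_min by (meson order_trans)
  qed
  with P show ?thesis unfolding shortest_path_def by blast
qed

lemma dist_shortest_path: "shortest_path P u v \<Longrightarrow> d u v = ereal (path_length w P)"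
  unfolding shortest_path_def dist_graph_def by (intro antisym INF_lower INF_greatest) auto

lemma dist_le_path_length: "is_path V E P u v \<Longrightarrow> d u v \<le> ereal (path_length w P)"
  unfolding dist_graph_def by (intro INF_lower) auto

lemma dist_infinite_or_shortest_path: "d u v = \<infinity> \<or> (\<exists>P. shortest_path P u v)"
proof (cases "\<exists>P. is_path V E P u v")
  case False
  then show ?thesis by (simp add: dist_graph_def top_ereal_def)
qed (use exists_shortest_path in blast)

lemma dist_nonneg: "d u v \<ge> 0"
  using dist_infinite_or_shortest_path[of u v]
proof
  assume "\<exists>P. shortest_path P u v"
  then obtain P where P: "shortest_path P u v" ..
  then have "is_path V E P u v" unfolding shortest_path_def ..
  then show ?thesis using dist_shortest_path[OF P] path_length_nonneg by simp
qed simp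

lemma dist_self: "u \<in> V \<Longrightarrow> d u u = 0"
  using dist_le_path_length[of "[u]" u u] dist_nonneg[of u u] by (simp add: zero_ereal_def)

lemma dist_commute: "d u v = d v u"
proof -
  have "d v u \<le> d u v" for u v
  proof (cases "d u v = \<infinity>")
    case False
    then obtain P where "shortest_path P u v" using dist_infinite_or_shortest_path by blast
    then have "is_path V E (rev P) v u" "d u v = ereal (path_length w (rev P))"
      using dist_shortest_path is_path_rev path_length_rev unfolding shortest_path_def by metis+
    then show ?thesis using dist_le_path_length[of "rev P" v u] by simp
  qed simp
  then show ?thesis by (meson antisym)
qed

lemma dist_triangle: "d u z \<le> d u v + d v z"
proof (cases "d u v = \<infinity> \<or> d v z = \<infinity>")
  case True then show ?thesis using dist_nonneg by auto
next
  case False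
  then obtain P Q where P: "shortest_path P u v" and Q: "shortest_path Q v z"
    using dist_infinite_or_shortest_path by blast
  have "Q \<noteq> [] \<and> hd Q = v" and P_last: "P \<noteq> [] \<and> last P = v"
    using P Q unfolding shortest_path_def is_path_def by auto
  then obtain Q' where Q': "Q = v # Q'" by (cases Q) auto
  have "is_path V E (P @ Q') u z"
    using P Q Q' is_path_append unfolding shortest_path_def by fastforce
  moreover have "path_length w (P @ Q') = path_length w P + path_length w Q"
    using path_length_append[of P w Q'] Q' P_last by simp
  ultimately show ?thesis
    using P Q dist_le_path_length dist_shortest_path by (metis plus_ereal.simps(1))
qed

lemma dist_le_edge_weight: "{u, v} \<in> E \<Longrightarrow> d u v \<le> ereal (w {u, v})"
  using dist_le_path_length[of "[u, v]" u v] edge_subset[of "{u, v}"] by (simp add: is_path_edge)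

lemma shortest_path_split:
  assumes "shortest_path (xs @ y # ys) u v"
  shows "shortest_path (xs @ [y]) u y" "shortest_path (y # ys) y v"
proof -
  have P: "is_path V E (xs @ y # ys) u v" and min: "\<And>Q. is_path V E Q u v \<Longrightarrow>
      path_length w (xs @ y # ys) \<le> path_length w Q"
    using assms unfolding shortest_path_def by auto
  have pre: "is_path V E (xs @ [y]) u y" and suf: "is_path V E (y # ys) y v"
    using is_path_split[OF P] by auto
  have len: "path_length w (xs @ y # ys) = path_length w (xs @ [y]) + path_length w (y # ys)"
    using path_length_append[of "xs @ [y]" w ys] by simp
  have "path_length w (xs @ [y]) \<le> path_length w Q" if Q: "is_path V E Q u y" for Q
  proof -
    have "Q \<noteq> [] \<and> last Q = y" using Q by (simp add: is_path_def)
    then have "path_length w (Q @ ys) = path_length w Q + path_length w (y # ys)"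
      using path_length_append[of Q w ys] by simp
    moreover have "is_path V E (Q @ ys) u v" using is_path_append[OF Q suf] by simp
    ultimately show ?thesis using min len by fastforce
  qed
  then show "shortest_path (xs @ [y]) u y" using pre unfolding shortest_path_def by blast
  have "path_length w (y # ys) \<le> path_length w Q" if Q: "is_path V E Q y v" for Q
  proof -
    obtain Q' where Q': "Q = y # Q'" using Q by (cases Q) (auto simp: is_path_def)
    then have "path_length w (xs @ [y] @ Q') = path_length w (xs @ [y]) + path_length w Q"
      using path_length_append[of "xs @ [y]" w Q'] by simp
    moreover have "is_path V E (xs @ [y] @ Q') u v" using is_path_append[OF pre Q] Q' by simp
    ultimately show ?thesis using min len by fastforce
  qed
  then show "shortest_path (y # ys) y v" using suf unfolding shortest_path_def by blast
qed

lemma shortest_path_rev: "shortest_path P u v \<Longrightarrow> shortest_path (rev P) v u"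
  unfolding shortest_path_def using is_path_rev path_length_rev by (metis rev_rev_ident)

lemma shortest_path_infix:
  assumes "shortest_path (xs @ ys @ zs) u v" "ys \<noteq> []"
  shows "shortest_path ys (hd ys) (last ys)"
proof -
  obtain ys' l where ys: "ys = ys' @ [l]" using assms(2) rev_exhaust by blast
  obtain h t where ht: "ys = h # t" using assms(2) list.exhaust by blast
  have "shortest_path ((xs @ ys') @ [l]) u l"
    using shortest_path_split(1)[of "xs @ ys'" l zs u v] assms(1) ys by simp
  then have "shortest_path (xs @ h # t) u l" using ys ht by simp
  then show ?thesis using shortest_path_split(2) ys ht by (metis last_snoc list.sel(1))
qed

lemma shortest_path_segment:
  assumes P: "shortest_path P x y" and ab: "a \<le> b" "b < length P"
  shows "shortest_path (take (Suc (b - a)) (drop a P)) (P ! a) (P ! b)"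
proof -
  define S where "S = take (Suc (b - a)) (drop a P)"
  have "take a P @ S = take (Suc b) P"
    using take_add[of a "Suc (b - a)" P] ab unfolding S_def by simp
  then have decomp: "P = take a P @ S @ drop (Suc b) P" by (metis append_assoc append_take_drop_id)
  have len: "length S = Suc (b - a)" using ab unfolding S_def by simp
  then have ne: "S \<noteq> []" by auto
  have "last S = P ! b" using ab len ne unfolding S_def by (simp add: last_conv_nth)
  moreover have "hd S = P ! a" using ab unfolding S_def by (simp add: hd_drop_conv_nth)
  ultimately show ?thesis
    using shortest_path_infix[of "take a P" S] decomp ne P unfolding S_def by metis
qed

lemma path_length_pos: "is_path V E xs u v \<Longrightarrow> u \<noteq> v \<Longrightarrow> path_length w xs > 0"
proof (induction xs arbitrary: u rule: induct_list012)
  case (3 x y zs)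
  then have "w {x, y} > 0" "path_length w (y # zs) \<ge> 0"
    using weight_pos path_length_nonneg by (auto simp: is_path_Cons_Cons)
  then show ?case by simp
qed (auto simp: is_path_def)

lemma shortest_path_vertex: "shortest_path P x y \<Longrightarrow> t < length P \<Longrightarrow> P ! t \<in> V"
  unfolding shortest_path_def is_path_def by (meson nth_mem subsetD)

lemma shortest_path_nth_0: "shortest_path P x y \<Longrightarrow> P ! 0 = x"
  unfolding shortest_path_def is_path_def by (metis hd_conv_nth)

lemma shortest_path_nth_last: "shortest_path P x y \<Longrightarrow> P ! (length P - 1) = y"
  unfolding shortest_path_def is_path_def by (metis One_nat_def last_conv_nth)

lemma dist_nth_shortest_path:
  assumes "shortest_path P x y" "a \<le> b" "b < length P"
  shows "d (P ! a) (P ! b) = ereal (prefix_length w P b - prefix_length w P a)"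
  using dist_shortest_path[OF shortest_path_segment[OF assms]] path_length_segment[OF assms(2,3)]
    by simp

lemma prefix_length_mono:
  assumes "shortest_path P x y" "a \<le> b" "b < length P"
  shows "prefix_length w P a \<le> prefix_length w P b"
  using dist_nth_shortest_path[OF assms] dist_nonneg[of "P ! a" "P ! b"] by simp

lemma shortest_path_nth_edge:
  assumes P: "shortest_path P x y" and t: "Suc t < length P"
  shows "{P ! t, P ! Suc t} \<in> E"
    and "w {P ! t, P ! Suc t} = prefix_length w P (Suc t) - prefix_length w P t"
proof -
  have "take (Suc (Suc t - t)) (drop t P) = [P ! t, P ! Suc t]"
    using t by (simp add: Cons_nth_drop_Suc[symmetric])
  then have "shortest_path [P ! t, P ! Suc t] (P ! t) (P ! Suc t)"
    and "path_length w [P ! t, P ! Suc t] = prefix_length w P (Suc t) - prefix_length w P t"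
    using shortest_path_segment[OF P, of t "Suc t"] path_length_segment[of t "Suc t" P w] t by auto
  then show "{P ! t, P ! Suc t} \<in> E"
    and "w {P ! t, P ! Suc t} = prefix_length w P (Suc t) - prefix_length w P t"
    unfolding shortest_path_def by (auto simp: is_path_Cons_Cons)
qed

lemma dist_real: "d u v \<noteq> \<infinity> \<Longrightarrow> ereal (real_of_ereal (d u v)) = d u v"
  using dist_nonneg[of u v] by (cases "d u v") auto

text \<open>\<open>real_of_ereal\<close> sends \<open>\<infinity>\<close> to \<open>0\<close>, but hopset edges only join vertices at finite distance.\<close>

definition edge_dist :: "'a set \<Rightarrow> real" where
  "edge_dist e = (THE r. \<exists>u v. e = {u, v} \<and> r = real_of_ereal (d u v))"

lemma edge_dist_doubleton [simp]: "edge_dist {u, v} = real_of_ereal (d u v)"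
  unfolding edge_dist_def
proof (rule the_equality)
  show "\<exists>a b. {u, v} = {a, b} \<and> real_of_ereal (d u v) = real_of_ereal (d a b)" by blast
  show "r = real_of_ereal (d u v)" if "\<exists>a b. {u, v} = {a, b} \<and> r = real_of_ereal (d a b)" for r
    using that dist_commute by (auto simp: doubleton_eq_iff)
qed

lemma path_length_union_weight_empty:
  "is_path V E xs u v \<Longrightarrow> path_length (union_weight E w {} wH) xs = path_length w xs"
  unfolding is_path_def path_length_def by (intro sum.cong) (auto simp: union_weight_def)

lemma is_hopset_empty:
  assumes \<beta>: "real (card V) \<le> \<beta>" and \<epsilon>: "0 \<le> \<epsilon>"
  shows "is_hopset V E w {} wH \<beta> \<epsilon>"
  unfolding is_hopset_def
proof (intro conjI ballI allI impI)
  fix u v assume "u \<in> V" "v \<in> V"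
  show "d u v \<le> hop_dist V (E \<union> {}) (union_weight E w {} wH) \<beta> u v"
    unfolding hop_dist_def
    by (rule INF_greatest) (use dist_le_path_length path_length_union_weight_empty in auto)
  show "hop_dist V (E \<union> {}) (union_weight E w {} wH) \<beta> u v \<le> ereal (1 + \<epsilon>) * d u v"
  proof (cases "d u v = \<infinity>")
    case True
    then show ?thesis using \<epsilon> by simp
  next
    case False
    then obtain P where P: "shortest_path P u v" using dist_infinite_or_shortest_path by blast
    then obtain ys where ys: "is_path V E ys u v" "distinct ys" "path_length w ys \<le> path_length w P"
      using exists_distinct_path_shorter unfolding shortest_path_def by blast
    have "length ys \<le> card V"
      using ys(1,2) finite_vertices unfolding is_path_def by (metis card_mono distinct_card)
    then have "real (path_hops ys) \<le> \<beta>" using \<beta> unfolding path_hops_def by linarith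
    then have "ys \<in> {xs. is_path V (E \<union> {}) xs u v \<and> real (path_hops xs) \<le> \<beta>}" using ys(1) by simp
    then have "hop_dist V (E \<union> {}) (union_weight E w {} wH) \<beta> u v
        \<le> ereal (path_length (union_weight E w {} wH) ys)"
      unfolding hop_dist_def by (rule INF_lower)
    also have "\<dots> = ereal (path_length w ys)" using path_length_union_weight_empty[OF ys(1)] by simp
    also have "\<dots> \<le> ereal ((1 + \<epsilon>) * path_length w P)"
    proof -
      have "0 \<le> path_length w P" using P path_length_nonneg unfolding shortest_path_def by blast
      then have "path_length w P \<le> (1 + \<epsilon>) * path_length w P" using \<epsilon> by (simp add: distrib_right)
      then show ?thesis using ys(3) by simp
    qed
    also have "\<dots> = ereal (1 + \<epsilon>) * d u v" using dist_shortest_path[OF P] by simp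
    finally show ?thesis .
  qed
qed auto

end

section \<open>The hopset of a level hierarchy\<close>

locale hierarchy = weighted_graph V E w for V :: "'a set" and E w +
  fixes A :: "nat \<Rightarrow> 'a set" and m :: nat
  assumes A_0: "A 0 = V" and A_Suc_subset: "A (Suc i) \<subseteq> A i" and A_top: "A (Suc m) = {}"
begin

lemma A_subset: "A i \<subseteq> V"
  by (induction i) (use A_0 A_Suc_subset in auto)

lemma finite_A: "finite (A i)"
  using A_subset finite_vertices finite_subset by blast

definition dist_to :: "'a \<Rightarrow> 'a set \<Rightarrow> ereal" where
  "dist_to u S = (INF s\<in>S. d u s)"

lemma dist_to_empty: "dist_to u {} = \<infinity>"
  by (simp add: dist_to_def top_ereal_def)

definition pivot :: "nat \<Rightarrow> 'a \<Rightarrow> 'a" where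
  "pivot i u = (SOME p. p \<in> A (Suc i) \<and> d u p = dist_to u (A (Suc i)))"

lemma pivot_mem_dist:
  assumes "A (Suc i) \<noteq> {}"
  shows "pivot i u \<in> A (Suc i)" "d u (pivot i u) = dist_to u (A (Suc i))"
proof -
  have "dist_to u (A (Suc i)) = Min (d u ` A (Suc i))"
    unfolding dist_to_def using assms finite_A by (simp add: Min_Inf)
  moreover have "Min (d u ` A (Suc i)) \<in> d u ` A (Suc i)"
    using assms finite_A by (intro Min_in) auto
  ultimately have "\<exists>p. p \<in> A (Suc i) \<and> d u p = dist_to u (A (Suc i))" by auto
  then show "pivot i u \<in> A (Suc i)" "d u (pivot i u) = dist_to u (A (Suc i))"
    unfolding pivot_def by (metis (mono_tags, lifting) someI_ex)+
qed

definition bunch :: "nat \<Rightarrow> 'a \<Rightarrow> 'a set" where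
  "bunch i u = {v \<in> A i. d u v < dist_to u (A (Suc i))}"

definition bunch_edges :: "'a set set" where
  "bunch_edges = {{u, v} | u v i. i \<le> m \<and> u \<in> A i \<and> v \<in> bunch i u \<and> u \<noteq> v \<and> d u v \<noteq> \<infinity>}"

definition pivot_edges :: "'a set set" where
  "pivot_edges = {{u, pivot i u} | u i. i < m \<and> u \<in> A i \<and> u \<notin> A (Suc i) \<and>
     A (Suc i) \<noteq> {} \<and> d u (pivot i u) \<noteq> \<infinity>}"

definition hop_edges :: "'a set set" where
  "hop_edges = bunch_edges \<union> pivot_edges"

abbreviation hop_weight :: "'a set \<Rightarrow> real" where
  "hop_weight \<equiv> union_weight E w hop_edges edge_dist"

lemma hop_edge_cases:
  assumes "e \<in> hop_edges"
  obtains u v where "e = {u, v}" "u \<in> V" "v \<in> V" "u \<noteq> v" "d u v \<noteq> \<infinity>"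
proof -
  from assms have "e \<in> bunch_edges \<or> e \<in> pivot_edges" unfolding hop_edges_def by simp
  then show ?thesis
  proof
    assume "e \<in> bunch_edges"
    then obtain u v i where "e = {u, v}" "u \<in> A i" "v \<in> bunch i u" "u \<noteq> v" "d u v \<noteq> \<infinity>"
      unfolding bunch_edges_def by blast
    then show ?thesis using that A_subset unfolding bunch_def by blast
  next
    assume "e \<in> pivot_edges"
    then obtain u i where "e = {u, pivot i u}" "u \<in> A i" "u \<notin> A (Suc i)" "A (Suc i) \<noteq> {}"
        "d u (pivot i u) \<noteq> \<infinity>"
      unfolding pivot_edges_def by blast
    moreover from this have "pivot i u \<in> A (Suc i)" by (simp add: pivot_mem_dist)
    ultimately show ?thesis using that A_subset by (metis subsetD)
  qed
qed

lemma dist_le_edge_dist: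
  assumes "{u, v} \<in> hop_edges"
  shows "d u v \<le> ereal (edge_dist {u, v})"
proof -
  obtain a b where "{u, v} = {a, b}" "d a b \<noteq> \<infinity>" using assms by (rule hop_edge_cases)
  then have "d u v \<noteq> \<infinity>" using dist_commute[of a b] by (auto simp: doubleton_eq_iff)
  then show ?thesis using dist_real[of u v] by simp
qed

lemma hop_edge_subset: "e \<in> hop_edges \<Longrightarrow> e \<subseteq> V \<and> card e = 2"
  by (elim hop_edge_cases) auto

definition hop_path :: "nat \<Rightarrow> 'a \<Rightarrow> 'a \<Rightarrow> real \<Rightarrow> bool" where
  "hop_path h x y L \<longleftrightarrow>
     (\<exists>xs. is_path V (E \<union> hop_edges) xs x y \<and> path_hops xs \<le> h \<and> path_length hop_weight xs \<le> L)"

lemma hop_path_trans: "hop_path h x y L \<Longrightarrow> hop_path h' y z L' \<Longrightarrow> hop_path (h + h') x z (L + L')"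
  unfolding hop_path_def
proof (elim exE conjE)
  fix xs ys
  assume xs: "is_path V (E \<union> hop_edges) xs x y" "path_hops xs \<le> h" "path_length hop_weight xs \<le> L"
    and ys: "is_path V (E \<union> hop_edges) ys y z" "path_hops ys \<le> h'" "path_length hop_weight ys \<le> L'"
  have xs_ne: "xs \<noteq> []" "last xs = y" using xs(1) by (auto simp: is_path_def)
  obtain ys' where ys': "ys = y # ys'" using ys(1) by (cases ys) (auto simp: is_path_def)
  have "path_hops (xs @ tl ys) = path_hops xs + path_hops ys"
    and "path_length hop_weight (xs @ tl ys)
      = path_length hop_weight xs + path_length hop_weight ys"
    using path_hops_append[of xs ys] path_length_append[of xs hop_weight ys'] xs_ne ys' by auto
  then show "\<exists>zs. is_path V (E \<union> hop_edges) zs x z \<and> path_hops zs \<le> h + h' \<and>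
      path_length hop_weight zs \<le> L + L'"
    using is_path_append[OF xs(1) ys(1)] xs ys by (intro exI[of _ "xs @ tl ys"]) auto
qed

lemma hop_path_mono: "hop_path h x y L \<Longrightarrow> h \<le> h' \<Longrightarrow> L \<le> L' \<Longrightarrow> hop_path h' x y L'"
  unfolding hop_path_def by force

lemma hop_path_or_escape_mono:
  assumes "hop_path h x y L \<or> (\<exists>z\<in>S. hop_path h x z L')" "h \<le> h'" "L \<le> M" "L' \<le> M'"
  shows "hop_path h' x y M \<or> (\<exists>z\<in>S. hop_path h' x z M')"
  using assms hop_path_mono by blast

lemma hop_path_refl: "x \<in> V \<Longrightarrow> hop_path 0 x x 0"
  unfolding hop_path_def by (intro exI[of _ "[x]"]) (simp add: path_hops_def)

lemma hop_path_sym: "hop_path h x y L \<Longrightarrow> hop_path h y x L"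
  unfolding hop_path_def using is_path_rev path_length_rev by (metis length_rev path_hops_def)

lemma hop_path_graph_edge: "{x, y} \<in> E \<Longrightarrow> hop_path 1 x y (w {x, y})"
  unfolding hop_path_def using edge_subset[of "{x, y}"]
  by (intro exI[of _ "[x, y]"]) (auto simp: is_path_edge path_hops_def union_weight_def)

lemma hop_path_hop_edge: "{x, y} \<in> hop_edges \<Longrightarrow> hop_path 1 x y (edge_dist {x, y})"
  unfolding hop_path_def using hop_edge_subset[of "{x, y}"]
  by (intro exI[of _ "[x, y]"]) (auto simp: is_path_edge path_hops_def union_weight_def)

lemma dist_le_hop_weight: "{x, y} \<in> E \<union> hop_edges \<Longrightarrow> d x y \<le> ereal (hop_weight {x, y})"
  using dist_le_edge_weight[of x y] dist_le_edge_dist[of x y]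
  by (auto simp: union_weight_def min_def)

lemma dist_le_path_hop_weight:
  "is_path V (E \<union> hop_edges) xs x y \<Longrightarrow> d x y \<le> ereal (path_length hop_weight xs)"
proof (induction xs arbitrary: x rule: induct_list012)
  case (2 u)
  then show ?case using dist_self by (simp add: zero_ereal_def)
next
  case (3 u v zs)
  then have "x = u" "{u, v} \<in> E \<union> hop_edges" "is_path V (E \<union> hop_edges) (v # zs) v y"
    by (auto simp: is_path_Cons_Cons)
  then have "d x y \<le> d x v + d v y" "d x v \<le> ereal (hop_weight {u, v})"
    "d v y \<le> ereal (path_length hop_weight (v # zs))"
    using dist_triangle[of x y v] dist_le_hop_weight 3(2) by auto
  then have "d x y \<le> ereal (hop_weight {u, v}) + ereal (path_length hop_weight (v # zs))"
    by (meson add_mono order_trans)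
  then show ?case using \<open>x = u\<close> by simp
qed (simp add: is_path_def)

lemma dist_le_hop_path: "hop_path h x y L \<Longrightarrow> d x y \<le> ereal L"
  unfolding hop_path_def using dist_le_path_hop_weight order_trans by (meson ereal_less_eq(3))

lemma bunch_edge_mem:
  "i \<le> m \<Longrightarrow> u \<in> A i \<Longrightarrow> v \<in> bunch i u \<Longrightarrow> u \<noteq> v \<Longrightarrow> d u v \<noteq> \<infinity> \<Longrightarrow> {u, v} \<in> hop_edges"
  unfolding hop_edges_def bunch_edges_def mem_Collect_eq
  by (intro UnI1 CollectI exI[of _ u] exI[of _ v] exI[of _ i]) simp

lemma pivot_edge_mem:
  "i < m \<Longrightarrow> u \<in> A i \<Longrightarrow> u \<notin> A (Suc i) \<Longrightarrow> A (Suc i) \<noteq> {} \<Longrightarrow> d u (pivot i u) \<noteq> \<infinity> \<Longrightarrow>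
    {u, pivot i u} \<in> hop_edges"
  unfolding hop_edges_def pivot_edges_def mem_Collect_eq
  by (intro UnI2 CollectI exI[of _ u] exI[of _ i]) simp

lemma bunch_or_pivot:
  assumes "i \<le> m" "u \<in> A i" "v \<in> A i" "d u v = ereal R"
  shows "hop_path 1 u v R \<or> (\<exists>z\<in>A (Suc i). hop_path 1 u z R)"
proof -
  have uV: "u \<in> V" and R: "0 \<le> R" using assms A_subset dist_nonneg[of u v] by auto
  show ?thesis
  proof (cases "v \<in> bunch i u")
    case True
    show ?thesis
    proof (cases "u = v")
      case True
      then show ?thesis using hop_path_mono[OF hop_path_refl[OF uV], of 1 R] R by simp
    next
      case False
      then have "{u, v} \<in> hop_edges"
        using \<open>v \<in> bunch i u\<close> assms by (intro bunch_edge_mem) auto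
      then show ?thesis using hop_path_hop_edge assms(4) by fastforce
    qed
  next
    case False
    then have close: "dist_to u (A (Suc i)) \<le> ereal R" using assms unfolding bunch_def by auto
    then have ne: "A (Suc i) \<noteq> {}" using dist_to_empty by auto
    then have "i < m" using assms(1) A_top by (cases "i = m") auto
    show ?thesis
    proof (cases "u \<in> A (Suc i)")
      case True
      then show ?thesis using hop_path_mono[OF hop_path_refl[OF uV], of 1 R] R by auto
    next
      case False
      have p: "pivot i u \<in> A (Suc i)" "d u (pivot i u) \<le> ereal R"
        using pivot_mem_dist[OF ne, of u] close by auto
      then have "{u, pivot i u} \<in> hop_edges"
        using \<open>i < m\<close> assms(2) False ne by (intro pivot_edge_mem) auto
      moreover have "edge_dist {u, pivot i u} \<le> R"
        using p dist_nonneg[of u "pivot i u"] by (cases "d u (pivot i u)") auto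
      ultimately show ?thesis using p(1) hop_path_hop_edge hop_path_mono by blast
    qed
  qed
qed

definition level_invariant :: "nat \<Rightarrow> nat \<Rightarrow> real \<Rightarrow> bool" where
  "level_invariant i T \<epsilon> \<longleftrightarrow> (\<forall>x y P. shortest_path P x y \<longrightarrow>
     hop_path T x y ((1 + \<epsilon>) * path_length w P) \<or>
     (\<exists>z\<in>A (Suc i). hop_path T x z (4 * path_length w P)))"

lemma level_invariant_0: "level_invariant 0 1 0"
  unfolding level_invariant_def
proof (intro allI impI)
  fix x y P assume P: "shortest_path P x y"
  then have "x \<in> A 0" "y \<in> A 0" "path_length w P \<ge> 0"
    using A_0 path_length_nonneg unfolding shortest_path_def by (auto dest: is_path_endpoints)
  then show "hop_path 1 x y ((1 + 0) * path_length w P) \<or>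
      (\<exists>z\<in>A (Suc 0). hop_path 1 x z (4 * path_length w P))"
    using bunch_or_pivot[of 0 x y] dist_shortest_path[OF P] hop_path_mono by fastforce
qed

lemma level_invariant_escape:
  assumes inv: "level_invariant i T \<epsilon>" and Q: "shortest_path Q p q"
    and far: "\<not> hop_path T p q ((1 + \<epsilon>) * path_length w Q)"
  shows "\<exists>z\<in>A (Suc i). hop_path T p z (4 * path_length w Q)"
    "\<exists>z\<in>A (Suc i). hop_path T q z (4 * path_length w Q)"
proof -
  show "\<exists>z\<in>A (Suc i). hop_path T p z (4 * path_length w Q)"
    using inv Q far unfolding level_invariant_def by blast
  have "\<not> hop_path T q p ((1 + \<epsilon>) * path_length w (rev Q))"
    using far hop_path_sym path_length_rev by metis
  then show "\<exists>z\<in>A (Suc i). hop_path T q z (4 * path_length w Q)"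
    using inv shortest_path_rev[OF Q] path_length_rev unfolding level_invariant_def by metis
qed

lemma hop_path_chain:
  assumes "\<And>j. t \<le> j \<Longrightarrow> j < t' \<Longrightarrow> hop_path T (p j) (p (Suc j)) ((1 + \<epsilon>) * (f (Suc j) - f j))"
    and "t \<le> t'" "p t \<in> V"
  shows "hop_path ((t' - t) * T) (p t) (p t') ((1 + \<epsilon>) * (f t' - f t))"
  using assms(2,1)
proof (induction t' rule: dec_induct)
  case base
  then show ?case using hop_path_refl[OF assms(3)] by simp
next
  case (step n)
  then have "hop_path ((n - t) * T + T) (p t) (p (Suc n))
      ((1 + \<epsilon>) * (f n - f t) + (1 + \<epsilon>) * (f (Suc n) - f n))"
    by (intro hop_path_trans) auto
  moreover have "(n - t) * T + T = (Suc n - t) * T" using step.hyps(1) by (simp add: Suc_diff_le)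
  ultimately show ?case by (simp add: algebra_simps)
qed

lemma shortest_path_segment_cases:
  assumes inv: "level_invariant i T \<epsilon>" and P: "shortest_path P x y" and ab: "a \<le> b" "b < length P"
    and step: "b = Suc a \<or> prefix_length w P b - prefix_length w P a \<le> \<Delta>"
    and T: "1 \<le> T" and \<epsilon>: "0 \<le> \<epsilon>"
  shows "hop_path T (P ! a) (P ! b) ((1 + \<epsilon>) * (prefix_length w P b - prefix_length w P a)) \<or>
    (\<exists>z\<in>A (Suc i). hop_path T (P ! a) z (4 * \<Delta>)) \<and> (\<exists>z\<in>A (Suc i). hop_path T (P ! b) z (4 * \<Delta>))"
proof (cases "b = Suc a")
  case True
  then have "hop_path 1 (P ! a) (P ! b) (prefix_length w P b - prefix_length w P a)"
    using shortest_path_nth_edge[OF P] ab hop_path_graph_edge by metis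
  moreover have "0 \<le> prefix_length w P b - prefix_length w P a"
    using prefix_length_mono[OF P ab] by simp
  then have "prefix_length w P b - prefix_length w P a
      \<le> (1 + \<epsilon>) * (prefix_length w P b - prefix_length w P a)"
    using \<epsilon> by (simp add: distrib_right)
  ultimately show ?thesis using T hop_path_mono by blast
next
  case False
  define Q where "Q = take (Suc (b - a)) (drop a P)"
  have Q: "shortest_path Q (P ! a) (P ! b)" unfolding Q_def using shortest_path_segment[OF P ab] .
  have len: "path_length w Q = prefix_length w P b - prefix_length w P a"
    unfolding Q_def using path_length_segment[OF ab] .
  then have short: "path_length w Q \<le> \<Delta>" using step False by simp
  show ?thesis
  proof (cases "hop_path T (P ! a) (P ! b) ((1 + \<epsilon>) * path_length w Q)")
    case True
    then show ?thesis using len by simp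
  next
    case False
    have "4 * path_length w Q \<le> 4 * \<Delta>" using short by simp
    then show ?thesis
      using level_invariant_escape[OF inv Q False] hop_path_mono[of T, OF _ order_refl] by blast
  qed
qed

lemma hop_path_bridge:
  assumes pre: "hop_path h x p ((1 + \<epsilon>) * a)" and suf: "hop_path h' q y ((1 + \<epsilon>) * (L - b))"
    and z1: "z1 \<in> A (Suc i)" "hop_path T p z1 (4 * \<Delta>)"
    and z2: "z2 \<in> A (Suc i)" "hop_path T q z2 (4 * \<Delta>)"
    and pq: "d p q = ereal (b - a)" and ab: "0 \<le> a" "a \<le> b" "b \<le> L" and \<Delta>: "12 * \<Delta> \<le> L"
    and \<epsilon>: "0 \<le> \<epsilon>" "\<epsilon> \<le> 1" and i: "Suc i \<le> m"
  shows "hop_path (h + h' + 2 * T + 1) x y ((1 + \<epsilon>) * L + 16 * \<Delta>) \<or>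
    (\<exists>z\<in>A (Suc (Suc i)). hop_path (h + h' + 2 * T + 1) x z (4 * L))"
proof -
  have "d z1 z2 \<le> d z1 p + (d p q + d q z2)"
    using dist_triangle[of z1 z2 p] dist_triangle[of p z2 q] by (meson add_left_mono order_trans)
  also have "\<dots> \<le> ereal (4 * \<Delta>) + (ereal (b - a) + ereal (4 * \<Delta>))"
    using dist_le_hop_path[OF hop_path_sym[OF z1(2)]] dist_le_hop_path[OF z2(2)] pq
    by (intro add_mono) auto
  finally have far: "d z1 z2 \<le> ereal (8 * \<Delta> + b - a)" by (simp add: algebra_simps)
  define R where "R = real_of_ereal (d z1 z2)"
  have R: "d z1 z2 = ereal R" "R \<le> 8 * \<Delta> + b - a"
    using far dist_nonneg[of z1 z2] unfolding R_def by (cases "d z1 z2"; auto)+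
  from bunch_or_pivot[OF i z1(1) z2(1) R(1)] show ?thesis
  proof
    assume "hop_path 1 z1 z2 R"
    then have "hop_path (h + T + 1 + T + h') x y
        ((1 + \<epsilon>) * a + 4 * \<Delta> + R + 4 * \<Delta> + (1 + \<epsilon>) * (L - b))"
      using pre z1(2) z2(2) suf by (meson hop_path_sym hop_path_trans)
    moreover have "(1 + \<epsilon>) * a + 4 * \<Delta> + R + 4 * \<Delta> + (1 + \<epsilon>) * (L - b) \<le> (1 + \<epsilon>) * L + 16 * \<Delta>"
      using R(2) mult_left_mono[OF ab(2) \<epsilon>(1)] by (simp add: algebra_simps)
    ultimately show ?thesis by (auto elim!: hop_path_mono)
  next
    assume "\<exists>z\<in>A (Suc (Suc i)). hop_path 1 z1 z R"
    then obtain z where z: "z \<in> A (Suc (Suc i))"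
      "hop_path (h + T + 1) x z ((1 + \<epsilon>) * a + 4 * \<Delta> + R)"
      using pre z1(2) by (meson hop_path_trans)
    moreover have "(1 + \<epsilon>) * a + 4 * \<Delta> + R \<le> 4 * L"
      using R(2) ab \<Delta> mult_right_mono[OF \<epsilon>(2) ab(1)] by (simp add: algebra_simps)
    ultimately have "hop_path (h + h' + 2 * T + 1) x z (4 * L)" by (auto elim!: hop_path_mono)
    then show ?thesis using z(1) by blast
  qed
qed

text \<open>Pieces approximated at level \<open>i\<close> are chained; the endpoints of the first and the last failing
  piece are within \<open>4 * \<Delta>\<close> of level \<open>i + 1\<close>, and a single bunch or pivot edge of level \<open>i + 1\<close>
  bridges them (\<open>hop_path_bridge\<close>).\<close>

lemma hop_path_along_cuts:
  assumes inv: "level_invariant i T \<epsilon>" and i: "Suc i \<le> m" and T: "1 \<le> T"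
    and \<epsilon>: "0 \<le> \<epsilon>" "\<epsilon> \<le> 1" and P: "shortest_path P x y"
    and cuts: "cut_sequence (prefix_length w P) (length P - 1) \<Delta> s c"
    and \<Delta>: "0 \<le> \<Delta>" "12 * \<Delta> \<le> path_length w P"
  shows "hop_path ((s + 2) * T) x y ((1 + \<epsilon>) * path_length w P + 16 * \<Delta>) \<or>
    (\<exists>z\<in>A (Suc (Suc i)). hop_path ((s + 2) * T) x z (4 * path_length w P))"
proof -
  define L where "L = path_length w P"
  define dd where "dd = prefix_length w P"
  have c0: "c 0 = 0" and cs: "c s = length P - 1"
    and c_mono: "\<And>j k. j \<le> k \<Longrightarrow> k \<le> s \<Longrightarrow> c j \<le> c k"
    and c_step: "\<And>j. j < s \<Longrightarrow> c (Suc j) = Suc (c j) \<or> dd (c (Suc j)) - dd (c j) \<le> \<Delta>"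
    using cuts unfolding cut_sequence_def dd_def by auto
  have len: "length P = Suc (length P - 1)" using P unfolding shortest_path_def is_path_def by simp
  have dd_mono: "dd a \<le> dd b" if "a \<le> b" "b \<le> length P - 1" for a b
    using prefix_length_mono[OF P that(1)] that len unfolding dd_def by simp
  have dd_last: "dd (length P - 1) = L" unfolding dd_def L_def by (rule prefix_length_last)
  have c_less: "c j < length P" if "j \<le> s" for j using c_mono[OF that order_refl] cs len by linarith
  define p where "p j = P ! c j" for j
  have p0: "p 0 = x" and ps: "p s = y"
    unfolding p_def c0 cs using shortest_path_nth_0[OF P] shortest_path_nth_last[OF P] by auto
  have p_V: "p j \<in> V" if "j \<le> s" for j
    using shortest_path_vertex[OF P c_less[OF that]] unfolding p_def .
  define good where
    "good j \<longleftrightarrow> hop_path T (p j) (p (Suc j)) ((1 + \<epsilon>) * (dd (c (Suc j)) - dd (c j)))" for j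
  have segment: "good j \<or> (\<exists>z\<in>A (Suc i). hop_path T (p j) z (4 * \<Delta>)) \<and>
      (\<exists>z\<in>A (Suc i). hop_path T (p (Suc j)) z (4 * \<Delta>))" if "j < s" for j
    using shortest_path_segment_cases[OF inv P c_mono[of j "Suc j"] c_less[of "Suc j"] _ T \<epsilon>(1)]
      c_step[OF that] that unfolding good_def p_def dd_def by auto
  show ?thesis
  proof (cases "\<forall>j<s. good j")
    case True
    then have "hop_path ((s - 0) * T) x y ((1 + \<epsilon>) * (dd (c s) - dd (c 0)))"
      using hop_path_chain[of 0 s T p \<epsilon> "\<lambda>j. dd (c j)"] p_V p0 ps unfolding good_def by auto
    then show ?thesis using c0 cs dd_last \<Delta>(1) unfolding L_def dd_def by (auto elim!: hop_path_mono)
  next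
    case False
    obtain f g where fg: "f \<le> g" "g < s" "\<not> good f" "\<not> good g"
      and before: "\<And>j. j < f \<Longrightarrow> good j" and after: "\<And>j. g < j \<Longrightarrow> j < s \<Longrightarrow> good j"
      using first_and_last_failure[OF False] by blast
    obtain z1 z2 where z1: "z1 \<in> A (Suc i)" "hop_path T (p f) z1 (4 * \<Delta>)"
      and z2: "z2 \<in> A (Suc i)" "hop_path T (p (Suc g)) z2 (4 * \<Delta>)"
      using segment[of f] segment[of g] fg by auto
    have pre: "hop_path (f * T) x (p f) ((1 + \<epsilon>) * dd (c f))"
      using hop_path_chain[of 0 f T p \<epsilon> "\<lambda>j. dd (c j)"] before p_V[of 0] p0 c0
      unfolding good_def dd_def by simp
    have suf: "hop_path ((s - Suc g) * T) (p (Suc g)) y ((1 + \<epsilon>) * (L - dd (c (Suc g))))"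
      using hop_path_chain[of "Suc g" s T p \<epsilon> "\<lambda>j. dd (c j)"] after p_V fg ps cs dd_last
      unfolding good_def by simp
    have ab: "c f \<le> c (Suc g)" "c (Suc g) < length P" using c_mono c_less fg by auto
    have "d (p f) (p (Suc g)) = ereal (dd (c (Suc g)) - dd (c f))"
      using dist_nth_shortest_path[OF P ab] unfolding p_def dd_def .
    moreover have "0 \<le> dd (c f)" "dd (c f) \<le> dd (c (Suc g))" "dd (c (Suc g)) \<le> L"
      using dd_mono[of 0 "c f"] dd_mono[of "c f" "c (Suc g)"] dd_mono[of "c (Suc g)" "length P - 1"]
        ab len dd_last unfolding dd_def by auto
    ultimately have bridge:
        "hop_path (f * T + (s - Suc g) * T + 2 * T + 1) x y ((1 + \<epsilon>) * L + 16 * \<Delta>) \<or>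
        (\<exists>z\<in>A (Suc (Suc i)). hop_path (f * T + (s - Suc g) * T + 2 * T + 1) x z (4 * L))"
      using hop_path_bridge[OF pre suf z1 z2 _ _ _ _ _ \<epsilon> i] \<Delta>(2) unfolding L_def by blast
    have "f + (s - Suc g) + 2 \<le> s + 1" using fg by linarith
    then have "(f + (s - Suc g) + 2) * T + 1 \<le> (s + 2) * T"
      using mult_le_mono1[of _ _ T] T by fastforce
    then have hops: "f * T + (s - Suc g) * T + 2 * T + 1 \<le> (s + 2) * T"
      by (simp add: add_mult_distrib)
    from bridge hops show ?thesis unfolding L_def by (rule hop_path_or_escape_mono) simp_all
  qed
qed

lemma level_invariant_step:
  assumes inv: "level_invariant i T \<epsilon>" and i: "Suc i \<le> m" and T: "1 \<le> T"
    and \<epsilon>: "0 \<le> \<epsilon>" "\<epsilon> \<le> 1" and lv: "16 \<le> lv"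
  shows "level_invariant (Suc i) (3 * lv * T) (\<epsilon> + 16 / lv)"
  unfolding level_invariant_def
proof (intro allI impI)
  fix x y P assume P: "shortest_path P x y"
  define L where "L = path_length w P"
  have L: "0 \<le> L" using P path_length_nonneg unfolding L_def shortest_path_def by blast
  have lv_pos: "0 < real lv" using lv by simp
  show "hop_path (3 * lv * T) x y ((1 + (\<epsilon> + 16 / lv)) * L) \<or>
    (\<exists>z\<in>A (Suc (Suc i)). hop_path (3 * lv * T) x z (4 * L))"
  proof (cases "x = y")
    case True
    have "x \<in> V" using P is_path_endpoints[of V E P x y] unfolding shortest_path_def by simp
    moreover have "0 \<le> (1 + (\<epsilon> + 16 / lv)) * L" using L \<epsilon> by simp
    ultimately show ?thesis using True hop_path_refl hop_path_mono by blast
  next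
    case False
    then have "0 < L" using P path_length_pos unfolding L_def shortest_path_def by blast
    define \<Delta> where "\<Delta> = L / lv"
    have \<Delta>: "0 < \<Delta>" "L = lv * \<Delta>" using \<open>0 < L\<close> lv_pos unfolding \<Delta>_def by auto
    have "length P = Suc (length P - 1)" using P unfolding shortest_path_def is_path_def by simp
    then have "prefix_length w P a \<le> prefix_length w P b" if "a \<le> b" "b \<le> length P - 1" for a b
      using prefix_length_mono[OF P that(1)] that(2) by simp
    moreover have "prefix_length w P (length P - 1) - prefix_length w P 0 \<le> real lv * \<Delta>"
      using prefix_length_last[of w P] \<Delta> unfolding L_def by simp
    ultimately obtain s c where s: "s \<le> 2 * lv + 1"
      and cuts: "cut_sequence (prefix_length w P) (length P - 1) \<Delta> s c"
      using exists_cut_sequence \<Delta>(1) by blast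
    have "12 * \<Delta> \<le> L" using \<Delta> lv by (simp add: mult_right_mono)
    then have "hop_path ((s + 2) * T) x y ((1 + \<epsilon>) * L + 16 * \<Delta>) \<or>
        (\<exists>z\<in>A (Suc (Suc i)). hop_path ((s + 2) * T) x z (4 * L))"
      using hop_path_along_cuts[OF inv i T \<epsilon> P cuts] \<Delta>(1) unfolding L_def by simp
    moreover have "(s + 2) * T \<le> 3 * lv * T" using s lv by (intro mult_le_mono1) simp
    moreover have "(1 + \<epsilon>) * L + 16 * \<Delta> = (1 + (\<epsilon> + 16 / lv)) * L"
      using \<Delta> lv_pos by (simp add: algebra_simps)
    ultimately show ?thesis by (elim hop_path_or_escape_mono) simp_all
  qed
qed

lemma level_invariant_upto:
  assumes "16 \<le> lv" "16 * m \<le> lv" "i \<le> m"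
  shows "level_invariant i ((3 * lv) ^ i) (16 * real i / lv)"
  using assms(3)
proof (induction i)
  case 0
  then show ?case using level_invariant_0 by simp
next
  case (Suc i)
  have "16 * real i \<le> real lv" using Suc.prems assms(2) by linarith
  then have "16 * real i / lv \<le> 1" using assms(1) by (simp add: divide_le_eq)
  then have "level_invariant (Suc i) (3 * lv * (3 * lv) ^ i) (16 * real i / lv + 16 / lv)"
    using Suc assms(1) by (intro level_invariant_step) auto
  moreover have "16 * real i / lv + 16 / lv = 16 * real (Suc i) / lv"
    by (simp add: add_divide_distrib algebra_simps)
  ultimately show ?case by simp
qed

lemma is_hopset_hop_edges:
  assumes lv: "16 \<le> lv" "16 * m \<le> lv" and \<epsilon>: "16 * real m / lv \<le> \<epsilon>" and \<beta>: "real ((3 * lv) ^ m) \<le> \<beta>"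
  shows "is_hopset V E w hop_edges edge_dist \<beta> \<epsilon>"
  unfolding is_hopset_def
proof (intro conjI ballI allI impI)
  show "e \<subseteq> V" "card e = 2" if "e \<in> hop_edges" for e using hop_edge_subset[OF that] by auto
  show "d u v \<le> ereal (edge_dist {u, v})" if "{u, v} \<in> hop_edges" for u v
    using dist_le_edge_dist[OF that] .
  fix u v assume "u \<in> V" "v \<in> V"
  show "d u v \<le> hop_dist V (E \<union> hop_edges) hop_weight \<beta> u v"
    unfolding hop_dist_def by (rule INF_greatest) (use dist_le_path_hop_weight in auto)
  have "0 \<le> 16 * real m / real lv" by simp
  then have "0 \<le> \<epsilon>" using \<epsilon> by linarith
  show "hop_dist V (E \<union> hop_edges) hop_weight \<beta> u v \<le> ereal (1 + \<epsilon>) * d u v"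
  proof (cases "d u v = \<infinity>")
    case True
    then show ?thesis using \<open>0 \<le> \<epsilon>\<close> by simp
  next
    case False
    then obtain P where P: "shortest_path P u v" using dist_infinite_or_shortest_path by blast
    have "hop_path ((3 * lv) ^ m) u v ((1 + 16 * real m / lv) * path_length w P)"
      using level_invariant_upto[OF lv order_refl] P A_top unfolding level_invariant_def by blast
    then obtain xs where xs: "is_path V (E \<union> hop_edges) xs u v" "path_hops xs \<le> (3 * lv) ^ m"
      "path_length hop_weight xs \<le> (1 + 16 * real m / lv) * path_length w P"
      unfolding hop_path_def by blast
    have "0 \<le> path_length w P" using P path_length_nonneg unfolding shortest_path_def by blast
    have "real (path_hops xs) \<le> \<beta>" using xs(2) \<beta> of_nat_le_iff order_trans by blast
    then have "hop_dist V (E \<union> hop_edges) hop_weight \<beta> u v \<le> ereal (path_length hop_weight xs)"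
      unfolding hop_dist_def using xs(1) by (intro INF_lower) auto
    also have "\<dots> \<le> ereal ((1 + \<epsilon>) * path_length w P)"
      using xs(3) \<epsilon> \<open>0 \<le> path_length w P\<close> by (simp add: order_trans[OF _ mult_right_mono])
    also have "\<dots> = ereal (1 + \<epsilon>) * d u v" using dist_shortest_path[OF P] by simp
    finally show ?thesis .
  qed
qed

lemma finite_bunch: "finite (bunch i u)"
  unfolding bunch_def using finite_A by simp

lemma bunch_eq:
  assumes "A (Suc i) \<noteq> {}"
  shows "bunch i u = {v \<in> A i. \<forall>x\<in>A (Suc i). d u v < d u x}"
proof -
  have "dist_to u (A (Suc i)) = Min (d u ` A (Suc i))"
    unfolding dist_to_def using assms finite_A by (simp add: Min_Inf)
  then show ?thesis unfolding bunch_def using assms finite_A by (auto simp: Min_gr_iff)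
qed

lemma card_bunch_edges_le: "card bunch_edges \<le> (\<Sum>i\<le>m. \<Sum>u\<in>A i. card (bunch i u))"
proof -
  have "bunch_edges \<subseteq> (\<Union>i\<le>m. (\<lambda>(u, v). {u, v}) ` Sigma (A i) (bunch i))"
    unfolding bunch_edges_def by force
  then have "card bunch_edges \<le> card (\<Union>i\<le>m. (\<lambda>(u, v). {u, v}) ` Sigma (A i) (bunch i))"
    by (rule card_mono[rotated]) (simp add: finite_A finite_bunch)
  also have "\<dots> \<le> (\<Sum>i\<le>m. card ((\<lambda>(u, v). {u, v}) ` Sigma (A i) (bunch i)))"
    by (rule card_UN_le) simp
  also have "\<dots> \<le> (\<Sum>i\<le>m. card (Sigma (A i) (bunch i)))"
    by (intro sum_mono card_image_le) (simp add: finite_A finite_bunch)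
  also have "\<dots> = (\<Sum>i\<le>m. \<Sum>u\<in>A i. card (bunch i u))"
    by (simp add: finite_A finite_bunch)
  finally show ?thesis .
qed

lemma card_pivot_edges_le: "card pivot_edges \<le> (\<Sum>i<m. card (A i))"
proof -
  have "pivot_edges \<subseteq> (\<Union>i<m. (\<lambda>u. {u, pivot i u}) ` A i)"
    unfolding pivot_edges_def by blast
  then have "card pivot_edges \<le> card (\<Union>i<m. (\<lambda>u. {u, pivot i u}) ` A i)"
    by (rule card_mono[rotated]) (simp add: finite_A)
  also have "\<dots> \<le> (\<Sum>i<m. card ((\<lambda>u. {u, pivot i u}) ` A i))" by (rule card_UN_le) simp
  also have "\<dots> \<le> (\<Sum>i<m. card (A i))" by (intro sum_mono card_image_le finite_A)
  finally show ?thesis .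
qed

lemma card_level_edges_le:
  assumes ne: "A (Suc i) \<noteq> {}"
    and avg: "real (\<Sum>u\<in>A i. card (bunch i u))
      \<le> real (card (A i)) * (card (A i) - card (A (Suc i))) / (card (A (Suc i)) + 1)"
  shows "real (\<Sum>u\<in>A i. card (bunch i u)) + real (card (A i))
    \<le> 2 * real (card (A i)) ^ 2 / real (card (A (Suc i)))"
proof -
  define a where "a = real (card (A i))"
  define b where "b = real (card (A (Suc i)))"
  have b: "1 \<le> b" "b \<le> a"
    using ne finite_A A_Suc_subset
      unfolding a_def b_def by (auto simp: Suc_le_eq card_gt_0_iff card_mono)
  have "real (\<Sum>u\<in>A i. card (bunch i u)) \<le> a * (a - b) / (b + 1)"
    using avg b
      unfolding a_def b_def by (simp add: of_nat_diff card_mono finite_A A_Suc_subset add.commute)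
  also have "\<dots> \<le> a * a / b"
    using b by (intro frac_le mult_left_mono) auto
  finally have "real (\<Sum>u\<in>A i. card (bunch i u)) \<le> a * a / b" .
  moreover have "a \<le> a * a / b" using b by (simp add: le_divide_eq mult_left_mono)
  ultimately show ?thesis
    unfolding a_def[symmetric] b_def[symmetric] by (simp add: power2_eq_square)
qed

lemma card_hop_edges_le:
  assumes ne: "\<And>i. i \<le> m \<Longrightarrow> A i \<noteq> {}"
    and avg: "\<And>i. i < m \<Longrightarrow> real (\<Sum>u\<in>A i. card (bunch i u))
      \<le> real (card (A i)) * (card (A i) - card (A (Suc i))) / (card (A (Suc i)) + 1)"
  shows "real (card hop_edges) \<le> (\<Sum>i<m. 2 * real (card (A i)) ^ 2 / real (card (A (Suc i))))
    + real (card (A m)) ^ 2"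
proof -
  have "card hop_edges \<le> (\<Sum>i\<le>m. \<Sum>u\<in>A i. card (bunch i u)) + (\<Sum>i<m. card (A i))"
    unfolding hop_edges_def
      using card_Un_le card_bunch_edges_le card_pivot_edges_le by (meson add_mono order_trans)
  also have "\<dots> = (\<Sum>i<m. (\<Sum>u\<in>A i. card (bunch i u)) + card (A i)) + (\<Sum>u\<in>A m. card (bunch m u))"
    by (simp add: sum.distrib lessThan_Suc_atMost[symmetric])
  finally have "real (card hop_edges)
      \<le> (\<Sum>i<m. real (\<Sum>u\<in>A i. card (bunch i u)) + real (card (A i)))
        + real (\<Sum>u\<in>A m. card (bunch m u))"
    by (simp flip: of_nat_add of_nat_sum)
  moreover have "(\<Sum>i<m. real (\<Sum>u\<in>A i. card (bunch i u)) + real (card (A i)))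
      \<le> (\<Sum>i<m. 2 * real (card (A i)) ^ 2 / real (card (A (Suc i))))"
    using card_level_edges_le ne avg by (intro sum_mono) simp
  moreover have "(\<Sum>u\<in>A m. card (bunch m u)) \<le> card (A m) ^ 2"
    using sum_bounded_above[of "A m" "\<lambda>u. card (bunch m u)" "card (A m)"]
    by (simp add: power2_eq_square bunch_def card_mono finite_A)
  then have "real (\<Sum>u\<in>A m. card (bunch m u)) \<le> real (card (A m) ^ 2)" by (simp only: of_nat_le_iff)
  ultimately show ?thesis by simp
qed

end

section \<open>Construction\<close>

context weighted_graph
begin

lemma exists_hierarchy:
  assumes sz0: "sz 0 = card V" and sz_mono: "\<And>i. i < m \<Longrightarrow> sz (Suc i) \<le> sz i"
  obtains A where "hierarchy V E w A m" "\<And>i. i \<le> m \<Longrightarrow> card (A i) = sz i"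
    "\<And>i. i < m \<Longrightarrow> real (\<Sum>u\<in>A i. card {v\<in>A i. \<forall>x\<in>A (Suc i). d u v < d u x})
       \<le> real (sz i) * (sz i - sz (Suc i)) / (sz (Suc i) + 1)"
proof -
  define good where "good X S s \<longleftrightarrow> S \<subseteq> X \<and> card S = s \<and>
    real (\<Sum>u\<in>X. card {v\<in>X. \<forall>x\<in>S. d u v < d u x}) \<le> real (card X) * (card X - s) / (s + 1)"
    for X S s
  define next_level where "next_level j X = (SOME S. good X S (sz j))" for j X
  define B where "B = rec_nat V (\<lambda>j X. next_level (Suc j) X)"
  define A where "A i = (if i \<le> m then B i else {})" for i
  have next_level: "good X (next_level j X) (sz j)" if "finite X" "sz j \<le> card X" for X j
    unfolding next_level_def
      using exists_subset_few_closer[OF that, of d] someI_ex[of "\<lambda>S. good X S (sz j)"]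
    unfolding good_def by blast
  have B: "B i \<subseteq> V \<and> card (B i) = sz i \<and> (i < m \<longrightarrow> good (B i) (B (Suc i)) (sz (Suc i)))"
    if "i \<le> m" for i
    using that
  proof (induction i)
    case 0
    then show ?case
      using sz0 next_level[OF finite_vertices, of 1] sz_mono[of 0] by (simp add: B_def)
  next
    case (Suc i)
    then have "good (B i) (B (Suc i)) (sz (Suc i))" "B i \<subseteq> V" by auto
    then have *: "B (Suc i) \<subseteq> V" "card (B (Suc i)) = sz (Suc i)" unfolding good_def by auto
    moreover have "finite (B (Suc i))" using *(1) finite_vertices finite_subset by blast
    ultimately show ?case
      using next_level[of "B (Suc i)" "Suc (Suc i)"] sz_mono[of "Suc i"] by (simp add: B_def)
  qed
  show ?thesis
  proof
    show "hierarchy V E w A m"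
    proof
      show "A 0 = V" by (simp add: A_def B_def)
      show "A (Suc m) = {}" by (simp add: A_def)
      show "A (Suc i) \<subseteq> A i" for i using B[of i] unfolding A_def good_def by auto
    qed
    show "card (A i) = sz i" if "i \<le> m" for i using B[OF that] that unfolding A_def by simp
    show "real (\<Sum>u\<in>A i. card {v\<in>A i. \<forall>x\<in>A (Suc i). d u v < d u x})
       \<le> real (sz i) * (sz i - sz (Suc i)) / (sz (Suc i) + 1)" if "i < m" for i
      using B[of i] that unfolding A_def good_def by auto
  qed
qed

lemma exists_sparse_hopset:
  assumes k: "1 \<le> k" and n: "4 ^ (k - 1) \<le> card V"
  obtains H wH where "real (card H) \<le> 36 * real (card V) powr (1 + 1 / (2 ^ k - 1))"
    "\<And>lv \<epsilon> \<beta>. 16 \<le> lv \<Longrightarrow> 16 * (k - 1) \<le> lv \<Longrightarrow> 16 * real (k - 1) / lv \<le> \<epsilon> \<Longrightarrow>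
       real ((3 * lv) ^ (k - 1)) \<le> \<beta> \<Longrightarrow> is_hopset V E w H wH \<beta> \<epsilon>"
proof -
  define sz where "sz = level_size (card V) k"
  have "(1::nat) \<le> 4 ^ (k - 1)" by simp
  then have n1: "1 \<le> card V" using n by linarith
  obtain A where A: "hierarchy V E w A (k - 1)" and card_A: "\<And>i. i \<le> k - 1 \<Longrightarrow> card (A i) = sz i"
    and avg: "\<And>i. i < k - 1 \<Longrightarrow> real (\<Sum>u\<in>A i. card {v\<in>A i. \<forall>x\<in>A (Suc i). d u v < d u x})
       \<le> real (sz i) * (sz i - sz (Suc i)) / (sz (Suc i) + 1)"
    using exists_hierarchy[of sz "k - 1"] level_size_Suc_le[OF n1] unfolding sz_def by auto
  interpret hierarchy V E w A "k - 1" by (rule A)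
  have ne: "A i \<noteq> {}" if "i \<le> k - 1" for i
    using card_A[OF that] level_size_ge_1[OF k n that] unfolding sz_def by auto
  have "real (card hop_edges) \<le> (\<Sum>i<k - 1. 2 * real (card (A i)) ^ 2 / real (card (A (Suc i))))
      + real (card (A (k - 1))) ^ 2"
    using ne avg bunch_eq card_A by (intro card_hop_edges_le) auto
  also have "\<dots> = (\<Sum>i<k - 1. 2 * real (sz i) ^ 2 / real (sz (Suc i))) + real (sz (k - 1)) ^ 2"
    using card_A by simp
  also have "\<dots> \<le> 36 * real (card V) powr (1 + 1 / (2 ^ k - 1))"
    unfolding sz_def by (rule level_size_sum_le[OF k n])
  finally show ?thesis using that is_hopset_hop_edges by blast
qed

lemma exists_hopset:
  assumes k: "1 \<le> k"
  shows "\<exists>H wH. real (card H) \<le> 64 * real (card V) powr (1 + 1 / (2 ^ k - 1)) \<and>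
    (\<forall>\<epsilon>. 0 < \<epsilon> \<and> \<epsilon> < 1 \<longrightarrow> is_hopset V E w H wH ((64 * real k / \<epsilon>) ^ k) \<epsilon>)"
proof (cases "4 ^ (k - 1) \<le> card V")
  case True
  obtain H wH where H: "real (card H) \<le> 36 * real (card V) powr (1 + 1 / (2 ^ k - 1))"
    and hopset: "\<And>lv \<epsilon> \<beta>. 16 \<le> lv \<Longrightarrow> 16 * (k - 1) \<le> lv \<Longrightarrow> 16 * real (k - 1) / lv \<le> \<epsilon> \<Longrightarrow>
      real ((3 * lv) ^ (k - 1)) \<le> \<beta> \<Longrightarrow> is_hopset V E w H wH \<beta> \<epsilon>"
    using exists_sparse_hopset[OF k True] by blast
  have "is_hopset V E w H wH ((64 * real k / \<epsilon>) ^ k) \<epsilon>" if "0 < \<epsilon>" "\<epsilon> < 1" for \<epsilon>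
    using exists_level_parameter[OF k that] hopset by metis
  moreover have "real (card H) \<le> 64 * real (card V) powr (1 + 1 / (2 ^ k - 1))" using H by simp
  ultimately show ?thesis by blast
next
  case False
  then show ?thesis
    using small_card_le_hop_bound[OF k] is_hopset_empty by (intro exI[of _ "{}"]) auto
qed

end

theorem mainTheorem3:
  shows "\<exists>C::real. C > 0 \<and>
    (\<forall>(V::nat set) E w (k::nat).
       undirected_graph V E \<longrightarrow> positive_weights E w \<longrightarrow> k \<ge> 1 \<longrightarrow>
       (\<exists>H wH. real (card H) \<le> C * real (card V) powr (1 + 1 / (2 ^ k - 1)) \<and>
          (\<forall>\<epsilon>::real. 0 < \<epsilon> \<and> \<epsilon> < 1 \<longrightarrow>
             is_hopset V E w H wH ((C * real k / \<epsilon>) ^ k) \<epsilon>)))"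
proof (intro exI[of _ 64] conjI allI impI)
  fix V :: "nat set" and E w and k :: nat
  assume "undirected_graph V E" "positive_weights E w" and "1 \<le> k"
  then show "\<exists>H wH. real (card H) \<le> 64 * real (card V) powr (1 + 1 / (2 ^ k - 1)) \<and>
      (\<forall>\<epsilon>. 0 < \<epsilon> \<and> \<epsilon> < 1 \<longrightarrow> is_hopset V E w H wH ((64 * real k / \<epsilon>) ^ k) \<epsilon>)"
    by (intro weighted_graph.exists_hopset) (unfold_locales)
qed simp

end
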